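(* Let $\mathcal{N}_{A'B'\to AB}$ be a bipartite replacer channel, $\mathcal{N}(\rho_{A'B'})=\operatorname{Tr}[\rho_{A'B'}]\,\omega_{AB}$ for a fixed state $\omega_{AB}$. Then $$E_N(\mathcal{N})=E_N(\omega_{AB}),\qquad \mathbf{R}(\mathcal{N})=\mathbf{R}(\omega_{AB}).$$
   Context: $T_X$ is the partial transpose on $X$. For a state, $E_N(\omega_{AB})=\log\|T_B(\omega_{AB})\|_1$. For a bipartite map (Alice: $A',A$; Bob: $B',B$), $E_N(\mathcal{M})=\log\|T_B\circ\mathcal{M}\circ T_{B'}\|_\diamond$ with $\|\mathcal{P}\|_\diamond=\sup_\psi\|(\mathrm{id}_{S_AS_B}\otimes\mathcal{P})(\psi_{S_AA'B'S_B})\|_1$ over pure states. $\mathbf{D}$ is a generalized divergence: a function $\mathbf{D}(\rho\|\sigma)$ ($\rho$ a state, $\sigma\ge0$) obeying $\mathbf{D}(\rho\|\sigma)\ge\mathbf{D}(\mathcal{E}(\rho)\|\mathcal{E}(\sigma))$ for all channels $\mathcal{E}$. Generalized channel divergence: $\mathbf{D}(\mathcal{N}\|\mathcal{M})=\sup_{\psi}\mathbf{D}((\mathrm{id}\otimes\mathcal{N})(\psi_{S_AA'B'S_B})\|(\mathrm{id}\otimes\mathcal{M})(\psi_{S_AA'B'S_B}))$ over pure states with $S_A\simeq A'$, $S_B\simeq B'$. Generalized Rains information of a bipartite channel: $\mathbf{R}(\mathcal{N})=\inf_{\mathcal{M}:E_N(\mathcal{M})\le0}\mathbf{D}(\mathcal{N}\|\mathcal{M})$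 over completely positive bipartite maps $\mathcal{M}_{A'B'\to AB}$. Generalized Rains relative entropy of a state: $\mathbf{R}(\omega_{AB})=\inf\{\mathbf{D}(\omega_{AB}\|\sigma_{AB}):\sigma_{AB}\ge0,\ E_N(\sigma_{AB})\le0\}$. *)

theory Defs
  imports "Jordan_Normal_Form.Spectral_Radius" "Jordan_Normal_Form.Schur_Decomposition"
          "HOL-Library.Extended_Real"
begin

(* Conventions: a system of dimension d is C^d; operators are complex d x d matrices.
   Composite system X Y with dims dX, dY: index i = x * dY + y. *)

definition mtrace :: "complex mat \<Rightarrow> complex" where
  "mtrace M = (\<Sum>i<dim_row M. M $$ (i,i))"

definition psd :: "nat \<Rightarrow> complex mat \<Rightarrow> bool" where
  "psd n X \<longleftrightarrow> X \<in> carrier_mat n n \<and>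
     (\<forall>v \<in> carrier_vec n. let q = (\<Sum>i<n. cnj (v $ i) * (X *\<^sub>v v) $ i) in Im q = 0 \<and> Re q \<ge> 0)"

definition is_state :: "nat \<Rightarrow> complex mat \<Rightarrow> bool" where
  "is_state n \<rho> \<longleftrightarrow> psd n \<rho> \<and> mtrace \<rho> = 1"

definition pure_dm :: "complex vec \<Rightarrow> complex mat" where
  "pure_dm \<psi> = mat (dim_vec \<psi>) (dim_vec \<psi>) (\<lambda>(i,j). \<psi> $ i * cnj (\<psi> $ j))"

definition unit_vecs :: "nat \<Rightarrow> complex vec set" where
  "unit_vecs d = {\<psi>. \<psi> \<in> carrier_vec d \<and> (\<Sum>i<d. (cmod (\<psi> $ i))\<^sup>2) = 1}"

(* trace norm = sum of singular values (with multiplicity) *)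
definition trace_norm :: "complex mat \<Rightarrow> real" where
  "trace_norm X = (let P = mat_adjoint X * X in
     (\<Sum>e\<in>spectrum P. real (order e (char_poly P)) * sqrt (Re e)))"

(* partial transpose on the second factor Y of X Y (dims dX, dY) *)
definition ptrans :: "nat \<Rightarrow> nat \<Rightarrow> complex mat \<Rightarrow> complex mat" where
  "ptrans dX dY M = mat (dX*dY) (dX*dY)
     (\<lambda>(i,j). M $$ ((i div dY) * dY + j mod dY, (j div dY) * dY + i mod dY))"

definition blk :: "nat \<Rightarrow> complex mat \<Rightarrow> nat \<Rightarrow> nat \<Rightarrow> complex mat" where
  "blk n X r s = mat n n (\<lambda>(i,j). X $$ (r*n + i, s*n + j))"

(* (id_R \<otimes> Phi) for a map Phi : n x n -> m x m, reference dimension k *)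
definition id_tensor :: "nat \<Rightarrow> nat \<Rightarrow> nat \<Rightarrow> (complex mat \<Rightarrow> complex mat) \<Rightarrow> complex mat \<Rightarrow> complex mat" where
  "id_tensor k n m \<Phi> X = mat (k*m) (k*m)
     (\<lambda>(i,j). \<Phi> (blk n X (i div m) (j div m)) $$ (i mod m, j mod m))"

definition lin_map :: "nat \<Rightarrow> nat \<Rightarrow> (complex mat \<Rightarrow> complex mat) \<Rightarrow> bool" where
  "lin_map n m \<Phi> \<longleftrightarrow> (\<forall>X \<in> carrier_mat n n. \<Phi> X \<in> carrier_mat m m) \<and>
     (\<forall>X \<in> carrier_mat n n. \<forall>Y \<in> carrier_mat n n. \<forall>a b.
        \<Phi> (a \<cdot>\<^sub>m X + b \<cdot>\<^sub>m Y) = a \<cdot>\<^sub>m \<Phi> X + b \<cdot>\<^sub>m \<Phi> Y)"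

definition completely_positive :: "nat \<Rightarrow> nat \<Rightarrow> (complex mat \<Rightarrow> complex mat) \<Rightarrow> bool" where
  "completely_positive n m \<Phi> \<longleftrightarrow> lin_map n m \<Phi> \<and>
     (\<forall>k X. psd (k*n) X \<longrightarrow> psd (k*m) (id_tensor k n m \<Phi> X))"

definition is_channel :: "nat \<Rightarrow> nat \<Rightarrow> (complex mat \<Rightarrow> complex mat) \<Rightarrow> bool" where
  "is_channel n m \<Phi> \<longleftrightarrow> completely_positive n m \<Phi> \<and>
     (\<forall>X \<in> carrier_mat n n. mtrace (\<Phi> X) = mtrace X)"

definition gen_divergence :: "(complex mat \<Rightarrow> complex mat \<Rightarrow> ereal) \<Rightarrow> bool" where
  "gen_divergence D \<longleftrightarrow> (\<forall>n m E \<rho> \<sigma>. is_channel n m E \<longrightarrow> is_state n \<rho> \<longrightarrow> psd n \<sigma> \<longrightarrow>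
      D (E \<rho>) (E \<sigma>) \<le> D \<rho> \<sigma>)"

definition EN_state :: "nat \<Rightarrow> nat \<Rightarrow> complex mat \<Rightarrow> real" where
  "EN_state dA dB \<omega> = log 2 (trace_norm (ptrans dA dB \<omega>))"

definition diamond_norm :: "nat \<Rightarrow> nat \<Rightarrow> (complex mat \<Rightarrow> complex mat) \<Rightarrow> real" where
  "diamond_norm n m P = Sup ((\<lambda>\<psi>. trace_norm (id_tensor n n m P (pure_dm \<psi>))) ` unit_vecs (n*n))"

definition EN_map :: "nat \<Rightarrow> nat \<Rightarrow> nat \<Rightarrow> nat \<Rightarrow> (complex mat \<Rightarrow> complex mat) \<Rightarrow> real" where
  "EN_map dA' dB' dA dB M =
     log 2 (diamond_norm (dA'*dB') (dA*dB) (ptrans dA dB \<circ> M \<circ> ptrans dA' dB'))"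

definition chan_div :: "(complex mat \<Rightarrow> complex mat \<Rightarrow> ereal) \<Rightarrow> nat \<Rightarrow> nat
    \<Rightarrow> (complex mat \<Rightarrow> complex mat) \<Rightarrow> (complex mat \<Rightarrow> complex mat) \<Rightarrow> ereal" where
  "chan_div D n m N M = (SUP \<psi>\<in>unit_vecs (n*n).
      D (id_tensor n n m N (pure_dm \<psi>)) (id_tensor n n m M (pure_dm \<psi>)))"

definition Rains_map :: "(complex mat \<Rightarrow> complex mat \<Rightarrow> ereal) \<Rightarrow> nat \<Rightarrow> nat \<Rightarrow> nat \<Rightarrow> nat
    \<Rightarrow> (complex mat \<Rightarrow> complex mat) \<Rightarrow> ereal" where
  "Rains_map D dA' dB' dA dB N = (INF M\<in>{M. completely_positive (dA'*dB') (dA*dB) M \<and>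
       EN_map dA' dB' dA dB M \<le> 0}. chan_div D (dA'*dB') (dA*dB) N M)"

definition Rains_state :: "(complex mat \<Rightarrow> complex mat \<Rightarrow> ereal) \<Rightarrow> nat \<Rightarrow> nat
    \<Rightarrow> complex mat \<Rightarrow> ereal" where
  "Rains_state D dA dB \<omega> = (INF \<sigma>\<in>{\<sigma>. psd (dA*dB) \<sigma> \<and> EN_state dA dB \<sigma> \<le> 0}. D \<omega> \<sigma>)"

end

theory Submission
  imports Defs
begin

text \<open>For the replacer channel \<open>N(\<rho>) = Tr \<rho> \<cdot> \<omega>\<close>, the map \<open>T\<^sub>B \<circ> N \<circ> T\<^sub>B\<^sub>'\<close> is again a
  replacer, with output \<open>T\<^sub>B \<omega>\<close>, because partial transposition preserves the trace. A
  replacer with output \<open>Z\<close> sends a pure input \<open>\<psi>\<close> to \<open>\<rho>\<^sub>S \<otimes> Z\<close>, where \<open>\<rho>\<^sub>S\<close> is the reduced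
  state of \<open>\<psi>\<close> on the reference system; as the trace norm is multiplicative on Kronecker
  products and \<open>\<parallel>\<rho>\<^sub>S\<parallel>\<^sub>1 = 1\<close>, every input yields \<open>\<parallel>T\<^sub>B \<omega>\<parallel>\<^sub>1\<close>, whence \<open>E\<^sub>N(N) = E\<^sub>N(\<omega>)\<close>.

  For the Rains quantities, an operator \<open>\<sigma> \<ge> 0\<close> with \<open>E\<^sub>N(\<sigma>) \<le> 0\<close> gives the feasible
  replacer map \<open>\<rho> \<mapsto> Tr \<rho> \<cdot> \<sigma>\<close>; its outputs are \<open>\<rho>\<^sub>S \<otimes> \<omega>\<close> and \<open>\<rho>\<^sub>S \<otimes> \<sigma>\<close>, images of
  \<open>\<omega>\<close> and \<open>\<sigma>\<close> under the channel \<open>X \<mapsto> \<rho>\<^sub>S \<otimes> X\<close>, so data processing bounds the channel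
  divergence by \<open>D(\<omega>\<parallel>\<sigma>)\<close>. Conversely, a feasible map \<open>M\<close> is tested on the input \<open>|00\<rangle>\<close>,
  with outputs \<open>|0\<rangle>\<langle>0| \<otimes> \<omega>\<close> and \<open>|0\<rangle>\<langle>0| \<otimes> \<sigma>\<close> for \<open>\<sigma> = M(|0\<rangle>\<langle>0|)\<close>: tracing out the
  reference bounds \<open>D(\<omega>\<parallel>\<sigma>)\<close> by the channel divergence, and the same input bounds
  \<open>\<parallel>T\<^sub>B \<sigma>\<parallel>\<^sub>1\<close> by the diamond norm defining \<open>E\<^sub>N(M) \<le> 0\<close>, so \<open>\<sigma>\<close> is feasible for \<open>\<omega>\<close>.\<close>

section \<open>Matrix preliminaries\<close>

lemma mat_adjoint_index [simp]:
  "i < dim_col A \<Longrightarrow> j < dim_row A \<Longrightarrow> mat_adjoint A $$ (i,j) = cnj (A $$ (j,i))"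
  unfolding mat_adjoint_def by (simp add: mat_of_rows_index)

lemma dim_mat_adjoint [simp]:
  "dim_row (mat_adjoint A) = dim_col A" "dim_col (mat_adjoint A) = dim_row A"
  unfolding mat_adjoint_def by simp_all

lemma mat_adjoint_carrier [simp]: "A \<in> carrier_mat r c \<Longrightarrow> mat_adjoint A \<in> carrier_mat c r"
  unfolding carrier_mat_def by simp

lemma mult_mat_vec_sum:
  "A \<in> carrier_mat r c \<Longrightarrow> v \<in> carrier_vec c \<Longrightarrow> i < r \<Longrightarrow> (A *\<^sub>v v) $ i = (\<Sum>j<c. A $$ (i,j) * v $ j)"
  by (auto simp: scalar_prod_def lessThan_atLeast0)

lemma mult_mat_sum:
  "A \<in> carrier_mat r c \<Longrightarrow> B \<in> carrier_mat c d \<Longrightarrow> i < r \<Longrightarrow> j < d \<Longrightarrow>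
   (A * B) $$ (i,j) = (\<Sum>k<c. A $$ (i,k) * B $$ (k,j))"
  by (auto simp: scalar_prod_def lessThan_atLeast0)

lemma scalar_prod_row_col:
  "A \<in> carrier_mat r c \<Longrightarrow> B \<in> carrier_mat c d \<Longrightarrow> i < r \<Longrightarrow> j < d \<Longrightarrow>
   row A i \<bullet> col B j = (\<Sum>k<c. A $$ (i,k) * B $$ (k,j))"
  using mult_mat_sum[of A r c B d i j] by simp

lemma cnj_mult_self_sum: "(\<Sum>k\<in>S. cnj (f k) * f k) = complex_of_real (\<Sum>k\<in>S. (cmod (f k))\<^sup>2)"
proof -
  have "\<And>z. cnj z * z = complex_of_real ((cmod z)\<^sup>2)" by (metis complex_norm_square mult.commute)
  then show ?thesis by (simp only: of_real_sum)
qed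

lemma mult_add_less_mult: "p < c \<Longrightarrow> q < d \<Longrightarrow> p * d + q < c * (d::nat)"
  by (metis add.commute add_less_cancel_left less_le_trans mult_Suc mult_le_mono1 Suc_leI)

lemma div_less_of_less_mult: "i < a * (c::nat) \<Longrightarrow> i div c < a"
  by (simp add: less_mult_imp_div_less)

lemma mod_less_of_less_mult: "i < a * (c::nat) \<Longrightarrow> i mod c < c"
  by (metis mod_less_divisor mult_0_right not_less_zero gr0I)

lemma sum_lessThan_mult: "(\<Sum>i<c*d. f i) = (\<Sum>p<c. \<Sum>q<d. f (p*d+q))" for c d :: nat
proof -
  have "(\<Sum>i<c*d. f i) = (\<Sum>p<c. sum f {p*d..<p*d+d})" by (rule sum.nat_group[symmetric])
  also have "\<dots> = (\<Sum>p<c. \<Sum>q<d. f (p*d+q))"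
  proof (rule sum.cong[OF refl])
    fix p
    have "sum f {0 + p*d..<d + p*d} = sum (\<lambda>q. f (q + p*d)) {0..<d}"
      by (rule sum.shift_bounds_nat_ivl)
    then show "sum f {p*d..<p*d+d} = (\<Sum>q<d. f (p*d+q))"
      by (simp add: add.commute lessThan_atLeast0)
  qed
  finally show ?thesis .
qed

lemma mtrace_mult_comm:
  assumes A: "A \<in> carrier_mat n m" and B: "B \<in> carrier_mat m n"
  shows "mtrace (A * B) = mtrace (B * A)"
proof -
  have "mtrace (A * B) = (\<Sum>i<n. \<Sum>k<m. A $$ (i,k) * B $$ (k,i))"
    unfolding mtrace_def using A B by (intro sum.cong) (auto simp: scalar_prod_row_col[OF A B])
  also have "\<dots> = (\<Sum>k<m. \<Sum>i<n. B $$ (k,i) * A $$ (i,k))"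
    by (subst sum.swap) (simp add: mult.commute)
  also have "\<dots> = mtrace (B * A)"
    unfolding mtrace_def using A B by (intro sum.cong) (auto simp: scalar_prod_row_col[OF B A])
  finally show ?thesis .
qed

lemma mtrace_similar_mat_wit:
  assumes s: "similar_mat_wit A T P Q"
  shows "mtrace A = mtrace T"
proof -
  define n where "n = dim_row A"
  note c = similar_mat_witD[OF n_def s]
  have "mtrace A = mtrace (P * (T * Q))" using c by (simp add: assoc_mult_mat[OF c(6) c(5) c(7)])
  also have "\<dots> = mtrace ((T * Q) * P)" by (rule mtrace_mult_comm[OF c(6)]) (use c in auto)
  also have "\<dots> = mtrace (T * (Q * P))" using c by (simp add: assoc_mult_mat[OF c(5) c(7) c(6)])
  also have "\<dots> = mtrace T" using c by simp
  finally show ?thesis .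
qed

lemma similar_mat_wit_square:
  assumes s: "similar_mat_wit R T P Q" shows "similar_mat_wit (R * R) (T * T) P Q"
proof -
  define c where "c = dim_row R"
  note cc = similar_mat_witD[OF c_def s]
  have R: "R \<in> carrier_mat c c" and T: "T \<in> carrier_mat c c"
    and P: "P \<in> carrier_mat c c" and Q: "Q \<in> carrier_mat c c"
    using cc by auto
  have TQ: "T * Q \<in> carrier_mat c c" using T Q by auto
  have PTQ: "P * (T * Q) \<in> carrier_mat c c" using P TQ by auto
  have R': "R = P * (T * Q)" using cc(3) assoc_mult_mat[OF P T Q] by simp
  have "R * R = P * ((T * Q) * (P * (T * Q)))" unfolding R' by (rule assoc_mult_mat[OF P TQ PTQ])
  also have "(T * Q) * (P * (T * Q)) = T * (Q * (P * (T * Q)))" by (rule assoc_mult_mat[OF T Q PTQ])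
  also have "Q * (P * (T * Q)) = (Q * P) * (T * Q)" by (rule assoc_mult_mat[OF Q P TQ, symmetric])
  also have "(Q * P) * (T * Q) = T * Q" unfolding cc(2) by (rule left_mult_one_mat[OF TQ])
  also have "T * (T * Q) = (T * T) * Q" by (rule assoc_mult_mat[OF T T Q, symmetric])
  also have "P * ((T * T) * Q) = P * (T * T) * Q" using P T Q by (simp add: assoc_mult_mat[OF P _ Q])
  finally have e: "R * R = P * (T * T) * Q" .
  show ?thesis unfolding similar_mat_wit_def Let_def using e cc T R by auto
qed

lemma upper_triangular_mult:
  assumes T: "T \<in> carrier_mat n n" and S: "S \<in> carrier_mat n n"
    and uT: "upper_triangular T" and uS: "upper_triangular S"
  shows "upper_triangular (T * S)"
    and "\<And>i. i < n \<Longrightarrow> (T * S) $$ (i,i) = T $$ (i,i) * S $$ (i,i)"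
proof -
  have zero: "T $$ (i,k) * S $$ (k,j) = 0" if "i < n" "k < n" "j \<le> i" "j < k \<or> k < i" for i j k
    using uT uS T S that by (auto simp: upper_triangular_def)
  show "upper_triangular (T * S)" unfolding upper_triangular_def
  proof (intro allI impI)
    fix i j assume i: "i < dim_row (T * S)" and ji: "j < i"
    then have i: "i < n" using T by auto
    have "(T * S) $$ (i,j) = (\<Sum>k<n. T $$ (i,k) * S $$ (k,j))" using i ji T S by (simp add: scalar_prod_row_col[OF T S])
    also have "\<dots> = 0" by (intro sum.neutral ballI, rule zero) (use i ji in auto)
    finally show "(T * S) $$ (i,j) = 0" .
  qed
  fix i assume i: "i < n"
  have "(T * S) $$ (i,i) = (\<Sum>k<n. T $$ (i,k) * S $$ (k,i))" using i T S by (simp add: scalar_prod_row_col[OF T S])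
  also have "\<dots> = (\<Sum>k<n. if k = i then T $$ (i,i) * S $$ (i,i) else 0)"
  proof (intro sum.cong refl)
    fix k assume "k \<in> {..<n}"
    then show "T $$ (i,k) * S $$ (k,i) = (if k = i then T $$ (i,i) * S $$ (i,i) else 0)"
      using zero[of i k i] i by (cases "k = i") (auto simp: nat_neq_iff)
  qed
  also have "\<dots> = T $$ (i,i) * S $$ (i,i)" using i by simp
  finally show "(T * S) $$ (i,i) = T $$ (i,i) * S $$ (i,i)" .
qed

lemma mat_adjoint_gram: assumes X: "(X::complex mat) \<in> carrier_mat r c"
  shows "mat_adjoint (mat_adjoint X * X) = mat_adjoint X * X"
proof (rule eq_matI)
  fix i j assume "i < dim_row (mat_adjoint X * X)" and "j < dim_col (mat_adjoint X * X)"
  then have i: "i < c" and j: "j < c" using X by auto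
  show "mat_adjoint (mat_adjoint X * X) $$ (i,j) = (mat_adjoint X * X) $$ (i,j)"
    using i j X by (simp add: scalar_prod_row_col[OF mat_adjoint_carrier[OF X] X] mult.commute)
qed (use X in auto)

lemma schur_triangularization:
  assumes "(A::complex mat) \<in> carrier_mat n n"
  obtains T P Q where "similar_mat_wit A T P Q" "upper_triangular T"
proof -
  obtain as where cp: "char_poly A = (\<Prod>a\<leftarrow>as. [:-a,1:])" using char_poly_factorized[OF assms] by auto
  obtain T P Q where "schur_decomposition A as = (T,P,Q)" by (cases "schur_decomposition A as") auto
  then show ?thesis using schur_decomposition[OF assms cp] that by blast
qed


section \<open>Kronecker products\<close>

definition kron :: "complex mat \<Rightarrow> complex mat \<Rightarrow> complex mat" where
  "kron A B = mat (dim_row A * dim_row B) (dim_col A * dim_col B)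
     (\<lambda>(i,j). A $$ (i div dim_row B, j div dim_col B) * B $$ (i mod dim_row B, j mod dim_col B))"

lemma kron_carrier: "A \<in> carrier_mat a b \<Longrightarrow> B \<in> carrier_mat c d \<Longrightarrow> kron A B \<in> carrier_mat (a*c) (b*d)"
  unfolding kron_def carrier_mat_def by auto

lemma dim_kron [simp]:
  "dim_row (kron A B) = dim_row A * dim_row B" "dim_col (kron A B) = dim_col A * dim_col B"
  unfolding kron_def by auto

lemma kron_index: "i < dim_row A * dim_row B \<Longrightarrow> j < dim_col A * dim_col B \<Longrightarrow>
  kron A B $$ (i,j) = A $$ (i div dim_row B, j div dim_col B) * B $$ (i mod dim_row B, j mod dim_col B)"
  unfolding kron_def by auto

lemma kron_index_block:
  assumes "A \<in> carrier_mat a b" "B \<in> carrier_mat c d" "p < a" "q < c" "p' < b" "q' < d"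
  shows "kron A B $$ (p*c + q, p'*d + q') = A $$ (p,p') * B $$ (q,q')"
  using assms by (simp add: kron_index mult_add_less_mult)

lemma kron_mult:
  assumes A: "A \<in> carrier_mat a b" and B: "B \<in> carrier_mat c d"
    and C: "C \<in> carrier_mat b e" and D: "D \<in> carrier_mat d f"
  shows "kron A B * kron C D = kron (A * C) (B * D)"
proof (rule eq_matI)
  fix i j assume "i < dim_row (kron (A * C) (B * D))" and "j < dim_col (kron (A * C) (B * D))"
  then have i: "i < a * c" and j: "j < e * f" using A B C D by auto
  have "(kron A B * kron C D) $$ (i,j) = (\<Sum>k<b*d. kron A B $$ (i,k) * kron C D $$ (k,j))"
    by (rule mult_mat_sum[OF kron_carrier[OF A B] kron_carrier[OF C D] i j])
  also have "\<dots> = (\<Sum>p<b. \<Sum>q<d. kron A B $$ (i,p*d+q) * kron C D $$ (p*d+q,j))"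
    by (rule sum_lessThan_mult)
  also have "\<dots> = (\<Sum>p<b. \<Sum>q<d. (A $$ (i div c, p) * C $$ (p, j div f)) * (B $$ (i mod c, q) * D $$ (q, j mod f)))"
  proof (intro sum.cong refl)
    fix p q assume "p \<in> {..<b}" "q \<in> {..<d}"
    then show "kron A B $$ (i,p*d+q) * kron C D $$ (p*d+q,j)
      = (A $$ (i div c, p) * C $$ (p, j div f)) * (B $$ (i mod c, q) * D $$ (q, j mod f))"
      using A B C D i j by (simp add: kron_index mult_add_less_mult)
  qed
  also have "\<dots> = (\<Sum>p<b. A $$ (i div c, p) * C $$ (p, j div f)) * (\<Sum>q<d. B $$ (i mod c, q) * D $$ (q, j mod f))"
    by (simp add: sum_product)
  also have "\<dots> = kron (A * C) (B * D) $$ (i,j)"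
  proof -
    have "kron (A * C) (B * D) $$ (i,j) = (A*C)$$(i div c, j div f) * (B*D)$$(i mod c, j mod f)"
      using A B C D i j by (subst kron_index) auto
    also have "\<dots> = (\<Sum>p<b. A $$ (i div c, p) * C $$ (p, j div f)) * (\<Sum>q<d. B $$ (i mod c, q) * D $$ (q, j mod f))"
      using i j by (simp only: mult_mat_sum[OF A C div_less_of_less_mult[OF i] div_less_of_less_mult[OF j]]
          mult_mat_sum[OF B D mod_less_of_less_mult[OF i] mod_less_of_less_mult[OF j]])
    finally show ?thesis by simp
  qed
  finally show "(kron A B * kron C D) $$ (i,j) = kron (A * C) (B * D) $$ (i,j)" .
qed (use A B C D in auto)

lemma kron_mat_adjoint: "mat_adjoint (kron A B) = kron (mat_adjoint A) (mat_adjoint B)"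
proof (rule eq_matI)
  fix i j assume "i < dim_row (kron (mat_adjoint A) (mat_adjoint B))"
    and "j < dim_col (kron (mat_adjoint A) (mat_adjoint B))"
  then have i: "i < dim_col A * dim_col B" and j: "j < dim_row A * dim_row B" by auto
  show "mat_adjoint (kron A B) $$ (i, j) = kron (mat_adjoint A) (mat_adjoint B) $$ (i, j)"
    using i j by (simp add: kron_index div_less_of_less_mult mod_less_of_less_mult)
qed auto

lemma kron_one: "kron (1\<^sub>m a) (1\<^sub>m b) = 1\<^sub>m (a*b)"
proof (rule eq_matI)
  fix i j assume "i < dim_row (1\<^sub>m (a*b))" and "j < dim_col (1\<^sub>m (a*b))"
  then have i: "i < a * b" and j: "j < a * b" by auto
  have "i = j \<longleftrightarrow> i div b = j div b \<and> i mod b = j mod b" by (metis div_mult_mod_eq)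
  then show "kron (1\<^sub>m a) (1\<^sub>m b) $$ (i, j) = 1\<^sub>m (a * b) $$ (i, j)"
    using i j by (simp add: kron_index div_less_of_less_mult mod_less_of_less_mult)
qed auto

lemma upper_triangular_kron:
  assumes A: "A \<in> carrier_mat a a" and B: "B \<in> carrier_mat b b"
    and uA: "upper_triangular A" and uB: "upper_triangular B"
  shows "upper_triangular (kron A B)"
  unfolding upper_triangular_def
proof (intro allI impI)
  fix i j assume i: "i < dim_row (kron A B)" and ji: "j < i"
  then have i: "i < a * b" using A B by auto
  then have j: "j < a * b" using ji by auto
  have le: "j div b \<le> i div b" using ji by (simp add: div_le_mono)
  show "kron A B $$ (i, j) = 0"
  proof (cases "j div b < i div b")
    case True
    then have "A $$ (i div b, j div b) = 0"
      using uA A div_less_of_less_mult[OF i] by (auto simp: upper_triangular_def)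
    then show ?thesis using A B i j by (simp add: kron_index)
  next
    case False
    then have eq: "j div b = i div b" using le by auto
    have "i = i div b * b + i mod b" "j = j div b * b + j mod b" by simp_all
    then have "j = i div b * b + j mod b" using eq by simp
    then have "j mod b < i mod b" using ji \<open>i = i div b * b + i mod b\<close> by linarith
    then have "B $$ (i mod b, j mod b) = 0"
      using uB B mod_less_of_less_mult[OF i] by (auto simp: upper_triangular_def)
    then show ?thesis using A B i j by (simp add: kron_index)
  qed
qed

lemma similar_mat_wit_kron:
  assumes s1: "similar_mat_wit A T1 P1 Q1" and s2: "similar_mat_wit B T2 P2 Q2"
  shows "similar_mat_wit (kron A B) (kron T1 T2) (kron P1 P2) (kron Q1 Q2)"
proof -
  define a where "a = dim_row A"
  define b where "b = dim_row B"
  note c1 = similar_mat_witD[OF a_def s1]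
  note c2 = similar_mat_witD[OF b_def s2]
  have PQ: "kron P1 P2 * kron Q1 Q2 = 1\<^sub>m (a*b)"
    using c1 c2 by (simp add: kron_mult[OF c1(6) c2(6) c1(7) c2(7)] kron_one)
  have QP: "kron Q1 Q2 * kron P1 P2 = 1\<^sub>m (a*b)"
    using c1 c2 by (simp add: kron_mult[OF c1(7) c2(7) c1(6) c2(6)] kron_one)
  have "kron P1 P2 * kron T1 T2 * kron Q1 Q2 = kron (P1*T1*Q1) (P2*T2*Q2)"
    by (simp add: kron_mult[OF c1(6) c2(6) c1(5) c2(5)]
        kron_mult[OF mult_carrier_mat[OF c1(6) c1(5)] mult_carrier_mat[OF c2(6) c2(5)] c1(7) c2(7)])
  then have A: "kron A B = kron P1 P2 * kron T1 T2 * kron Q1 Q2" using c1(3) c2(3) by simp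
  have "kron A B \<in> carrier_mat (a*b) (a*b)" "kron T1 T2 \<in> carrier_mat (a*b) (a*b)"
     "kron P1 P2 \<in> carrier_mat (a*b) (a*b)" "kron Q1 Q2 \<in> carrier_mat (a*b) (a*b)"
    using kron_carrier[OF c1(4) c2(4)] kron_carrier[OF c1(5) c2(5)]
      kron_carrier[OF c1(6) c2(6)] kron_carrier[OF c1(7) c2(7)] by auto
  moreover have "dim_row (kron A B) = a * b" using a_def b_def by simp
  ultimately show ?thesis unfolding similar_mat_wit_def Let_def using PQ QP A by auto
qed

lemma mtrace_kron:
  assumes A: "A \<in> carrier_mat n n" and B: "B \<in> carrier_mat m m"
  shows "mtrace (kron A B) = mtrace A * mtrace B"
proof -
  have "mtrace (kron A B) = (\<Sum>p<n. \<Sum>q<m. kron A B $$ (p*m+q, p*m+q))"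
    unfolding mtrace_def using A B by (simp add: sum_lessThan_mult)
  also have "\<dots> = mtrace A * mtrace B"
    unfolding mtrace_def using A B by (simp add: kron_index_block[OF A B] sum_product)
  finally show ?thesis .
qed

section \<open>The trace norm\<close>

lemma order_prod_linear_factors: "order e (\<Prod>a\<leftarrow>as. [:-a,1:]) = count_list as (e::complex)"
proof (induction as)
  case Nil then show ?case by (simp add: order_0I)
next
  case (Cons a as)
  have nz: "(\<Prod>a\<leftarrow>as. [:-a,1::complex:]) \<noteq> 0" by auto
  have "order e ([:-a,1:] * (\<Prod>a\<leftarrow>as. [:-a,1:])) = order e [:-a,1:] + order e (\<Prod>a\<leftarrow>as. [:-a,1:])"
    by (rule order_mult) (metis nz pCons_eq_0_iff mult_eq_0_iff one_neq_zero)
  then show ?case using Cons by (simp add: order_linear')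
qed

lemma poly_prod_linear_factors_eq_0: "poly (\<Prod>a\<leftarrow>as. [:-a,1:]) (k::complex) = 0 \<longleftrightarrow> k \<in> set as"
  by (induction as) auto

lemma sum_count_list_mult: "(\<Sum>x\<in>set xs. real (count_list xs x) * f x) = sum_list (map f xs)"
proof (induction xs)
  case (Cons x xs)
  show ?case
  proof cases
    assume xin: "x \<in> set xs"
    have "set (x#xs) = insert x (set xs - {x})" using xin by auto
    then have "(\<Sum>y\<in>set (x#xs). real (count_list (x#xs) y) * f y)
       = real (count_list (x#xs) x) * f x + (\<Sum>y\<in>set xs - {x}. real (count_list (x#xs) y) * f y)"
      by (simp add: sum.insert_remove)
    also have "(\<Sum>y\<in>set xs - {x}. real (count_list (x#xs) y) * f y)
        = (\<Sum>y\<in>set xs - {x}. real (count_list xs y) * f y)"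
      by (rule sum.cong) auto
    also have "\<dots> = (\<Sum>y\<in>set xs. real (count_list xs y) * f y) - real (count_list xs x) * f x"
      using xin by (simp add: sum_diff1)
    finally show ?thesis using Cons.IH by (simp add: algebra_simps)
  next
    assume xn: "x \<notin> set xs"
    have "(\<Sum>y\<in>set xs. real (count_list (x#xs) y) * f y) = (\<Sum>y\<in>set xs. real (count_list xs y) * f y)"
      by (rule sum.cong) (use xn in auto)
    then show ?thesis using Cons.IH xn by simp
  qed
qed simp

lemma trace_norm_char_poly_factors:
  assumes X: "X \<in> carrier_mat r c"
    and cp: "char_poly (mat_adjoint X * X) = (\<Prod>a\<leftarrow>as. [:-a,1:])"
  shows "trace_norm X = (\<Sum>a\<leftarrow>as. sqrt (Re a))"
proof -
  have P: "mat_adjoint X * X \<in> carrier_mat c c" using X by auto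
  have "spectrum (mat_adjoint X * X) = set as"
    unfolding spectrum_root_char_poly[OF P] cp poly_prod_linear_factors_eq_0 by auto
  then show ?thesis
    unfolding trace_norm_def Let_def order_prod_linear_factors cp by (simp add: sum_count_list_mult)
qed

lemma quadratic_form_gram:
  assumes X: "X \<in> carrier_mat r c" and v: "v \<in> carrier_vec c"
  shows "(\<Sum>i<c. cnj (v$i) * ((mat_adjoint X * X) *\<^sub>v v) $ i)
       = complex_of_real (\<Sum>k<r. (cmod ((X *\<^sub>v v)$k))\<^sup>2)"
proof -
  have P: "mat_adjoint X * X \<in> carrier_mat c c" using X by auto
  have "(\<Sum>i<c. cnj (v$i) * ((mat_adjoint X * X) *\<^sub>v v) $ i)
      = (\<Sum>i<c. cnj (v$i) * (\<Sum>j<c. (\<Sum>k<r. cnj (X$$(k,i)) * X$$(k,j)) * v $ j))"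
  proof (intro sum.cong refl)
    fix i assume i: "i \<in> {..<c}"
    have "((mat_adjoint X * X) *\<^sub>v v) $ i = (\<Sum>j<c. (mat_adjoint X * X) $$ (i,j) * v $ j)"
      using i by (intro mult_mat_vec_sum[OF P v]) auto
    also have "\<dots> = (\<Sum>j<c. (\<Sum>k<r. cnj (X$$(k,i)) * X$$(k,j)) * v $ j)"
      using i X by (intro sum.cong refl) (subst mult_mat_sum[OF mat_adjoint_carrier[OF X] X], auto)
    finally show "cnj (v$i) * ((mat_adjoint X * X) *\<^sub>v v) $ i
        = cnj (v$i) * (\<Sum>j<c. (\<Sum>k<r. cnj (X$$(k,i)) * X$$(k,j)) * v $ j)" by simp
  qed
  also have "\<dots> = (\<Sum>k<r. \<Sum>i<c. \<Sum>j<c. cnj (v$i) * cnj (X$$(k,i)) * X$$(k,j) * v $ j)"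
    by (simp add: sum_distrib_left sum_distrib_right mult.assoc sum.swap[of _ "{..<r}"])
  also have "\<dots> = (\<Sum>k<r. cnj ((X *\<^sub>v v)$k) * (X *\<^sub>v v)$k)"
  proof (intro sum.cong refl)
    fix k assume k: "k \<in> {..<r}"
    have "(X *\<^sub>v v)$k = (\<Sum>j<c. X $$ (k,j) * v $ j)" using k by (intro mult_mat_vec_sum[OF X v]) auto
    then show "(\<Sum>i<c. \<Sum>j<c. cnj (v$i) * cnj (X$$(k,i)) * X$$(k,j) * v $ j) = cnj ((X *\<^sub>v v)$k) * (X *\<^sub>v v)$k"
      by (simp add: sum_distrib_left sum_distrib_right mult.assoc mult.left_commute) (rule sum.swap)
  qed
  finally show ?thesis by (simp only: cnj_mult_self_sum)
qed

lemma gram_eigenvalue_nonneg: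
  assumes X: "X \<in> carrier_mat r c" and ev: "eigenvalue (mat_adjoint X * X) a"
  shows "Im a = 0 \<and> Re a \<ge> 0"
proof -
  have P: "mat_adjoint X * X \<in> carrier_mat c c" using X by auto
  obtain v where "eigenvector (mat_adjoint X * X) v a" using ev unfolding eigenvalue_def by auto
  then have v: "v \<in> carrier_vec c" and v0: "v \<noteq> 0\<^sub>v c" and Pv: "(mat_adjoint X * X) *\<^sub>v v = a \<cdot>\<^sub>v v"
    unfolding eigenvector_def using P by auto
  define nv where "nv = (\<Sum>k<c. (cmod (v$k))\<^sup>2)"
  define nw where "nw = (\<Sum>k<r. (cmod ((X *\<^sub>v v)$k))\<^sup>2)"
  obtain k0 where k0: "k0 < c" "v $ k0 \<noteq> 0" using v v0 by (metis eq_vecI carrier_vecD index_zero_vec(1,2))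
  have "0 < (cmod (v$k0))\<^sup>2" using k0 by simp
  also have "\<dots> \<le> nv" unfolding nv_def by (rule member_le_sum) (use k0 in auto)
  finally have nv: "nv > 0" .
  have nw: "nw \<ge> 0" unfolding nw_def by (rule sum_nonneg) auto
  have "(\<Sum>i<c. cnj (v$i) * ((mat_adjoint X * X) *\<^sub>v v) $ i) = (\<Sum>i<c. a * (cnj (v$i) * v$i))"
    unfolding Pv using v by (intro sum.cong refl) auto
  also have "\<dots> = a * complex_of_real nv"
    unfolding nv_def cnj_mult_self_sum[symmetric] by (simp add: sum_distrib_left)
  finally have "(\<Sum>i<c. cnj (v$i) * ((mat_adjoint X * X) *\<^sub>v v) $ i) = a * complex_of_real nv" .
  then have "a * complex_of_real nv = complex_of_real nw"
    unfolding quadratic_form_gram[OF X v] nw_def by simp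
  then have "a = complex_of_real (nw / nv)" using nv by (simp add: field_simps)
  then show ?thesis using nv nw by simp
qed

lemma char_poly_similar_upper_triangular:
  assumes A: "A \<in> carrier_mat n n" and s: "similar_mat_wit A T P Q" and u: "upper_triangular T"
  shows "char_poly A = (\<Prod>a\<leftarrow>diag_mat T. [:-a,1:])"
proof -
  have T: "T \<in> carrier_mat n n" using similar_mat_witD2[OF A s] by auto
  have "char_poly A = char_poly T"
    using s by (intro char_poly_similar) (auto simp: similar_mat_def)
  also have "\<dots> = (\<Prod>a\<leftarrow>diag_mat T. [:-a,1:])" by (rule char_poly_upper_triangular[OF T u])
  finally show ?thesis .
qed

text \<open>A triangularization \<open>T\<close> of \<open>X\<^sup>H X\<close> carries the squared singular values of \<open>X\<close> on its diagonal.\<close>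

lemma trace_norm_triangularization:
  assumes X: "X \<in> carrier_mat r c"
    and s: "similar_mat_wit (mat_adjoint X * X) T P Q" and uT: "upper_triangular T"
  shows "trace_norm X = (\<Sum>i<c. sqrt (Re (T$$(i,i))))"
    and "\<And>i. i < c \<Longrightarrow> Im (T$$(i,i)) = 0 \<and> Re (T$$(i,i)) \<ge> 0"
proof -
  have P: "mat_adjoint X * X \<in> carrier_mat c c" using X by auto
  have T: "T \<in> carrier_mat c c" using similar_mat_witD2[OF P s] by auto
  note cp = char_poly_similar_upper_triangular[OF P s uT]
  have dT: "diag_mat T = map (\<lambda>i. T$$(i,i)) [0..<c]" using T by (simp add: diag_mat_def)
  show "trace_norm X = (\<Sum>i<c. sqrt (Re (T$$(i,i))))"
    unfolding trace_norm_char_poly_factors[OF X cp] dT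
    by (simp add: sum_list_distinct_conv_sum_set lessThan_atLeast0 comp_def)
  fix i assume "i < c"
  then have "poly (char_poly (mat_adjoint X * X)) (T$$(i,i)) = 0"
    unfolding cp poly_prod_linear_factors_eq_0 dT by simp
  then show "Im (T$$(i,i)) = 0 \<and> Re (T$$(i,i)) \<ge> 0"
    by (intro gram_eigenvalue_nonneg[OF X]) (simp add: eigenvalue_root_char_poly[OF P])
qed

lemma trace_norm_nonneg: assumes X: "X \<in> carrier_mat r c" shows "trace_norm X \<ge> 0"
proof -
  obtain T P Q where s: "similar_mat_wit (mat_adjoint X * X) T P Q" and u: "upper_triangular T"
    using schur_triangularization[OF mult_carrier_mat[OF mat_adjoint_carrier[OF X] X]] by metis
  show ?thesis
    unfolding trace_norm_triangularization(1)[OF X s u]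
    using trace_norm_triangularization(2)[OF X s u] by (intro sum_nonneg) auto
qed

lemma trace_norm_kron:
  assumes X: "X \<in> carrier_mat r c" and Y: "Y \<in> carrier_mat s d"
  shows "trace_norm (kron X Y) = trace_norm X * trace_norm Y"
proof -
  obtain T1 P1 Q1 where s1: "similar_mat_wit (mat_adjoint X * X) T1 P1 Q1" and u1: "upper_triangular T1"
    using schur_triangularization[OF mult_carrier_mat[OF mat_adjoint_carrier[OF X] X]] by metis
  obtain T2 P2 Q2 where s2: "similar_mat_wit (mat_adjoint Y * Y) T2 P2 Q2" and u2: "upper_triangular T2"
    using schur_triangularization[OF mult_carrier_mat[OF mat_adjoint_carrier[OF Y] Y]] by metis
  have T1: "T1 \<in> carrier_mat c c" using s1 X unfolding similar_mat_wit_def Let_def by auto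
  have T2: "T2 \<in> carrier_mat d d" using s2 Y unfolding similar_mat_wit_def Let_def by auto
  note diag1 = trace_norm_triangularization(2)[OF X s1 u1]
  note diag2 = trace_norm_triangularization(2)[OF Y s2 u2]
  have "mat_adjoint (kron X Y) * kron X Y = kron (mat_adjoint X * X) (mat_adjoint Y * Y)"
    unfolding kron_mat_adjoint by (rule kron_mult[OF mat_adjoint_carrier[OF X] mat_adjoint_carrier[OF Y] X Y])
  then have s: "similar_mat_wit (mat_adjoint (kron X Y) * kron X Y) (kron T1 T2) (kron P1 P2) (kron Q1 Q2)"
    using similar_mat_wit_kron[OF s1 s2] by simp
  have "trace_norm (kron X Y) = (\<Sum>i<c*d. sqrt (Re (kron T1 T2 $$ (i,i))))"
    by (rule trace_norm_triangularization(1)[OF kron_carrier[OF X Y] s upper_triangular_kron[OF T1 T2 u1 u2]])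
  also have "\<dots> = (\<Sum>p<c. \<Sum>q<d. sqrt (Re (T1$$(p,p))) * sqrt (Re (T2$$(q,q))))"
    unfolding sum_lessThan_mult
    using diag1 diag2 by (intro sum.cong refl) (simp add: kron_index_block[OF T1 T2] real_sqrt_mult)
  also have "\<dots> = trace_norm X * trace_norm Y"
    unfolding trace_norm_triangularization(1)[OF X s1 u1] trace_norm_triangularization(1)[OF Y s2 u2]
    by (simp add: sum_product)
  finally show ?thesis .
qed

lemma trace_norm_gram:
  assumes X: "(X::complex mat) \<in> carrier_mat r c"
  shows "trace_norm (mat_adjoint X * X) = Re (mtrace (mat_adjoint X * X))"
proof -
  define R where "R = mat_adjoint X * X"
  have R: "R \<in> carrier_mat c c" using X unfolding R_def by auto
  obtain T P Q where s: "similar_mat_wit R T P Q" and u: "upper_triangular T"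
    using schur_triangularization[OF R] by metis
  have T: "T \<in> carrier_mat c c" using similar_mat_witD2[OF R s] by auto
  have diag: "Im (T$$(i,i)) = 0 \<and> Re (T$$(i,i)) \<ge> 0" if "i < c" for i
    using trace_norm_triangularization(2)[OF X s[unfolded R_def] u] that by blast
  have s2: "similar_mat_wit (mat_adjoint R * R) (T * T) P Q"
    unfolding R_def mat_adjoint_gram[OF X] using similar_mat_wit_square[OF s] by (simp add: R_def)
  have "trace_norm R = (\<Sum>i<c. sqrt (Re ((T*T)$$(i,i))))"
    by (rule trace_norm_triangularization(1)[OF R s2 upper_triangular_mult(1)[OF T T u u]])
  also have "\<dots> = (\<Sum>i<c. Re (T$$(i,i)))"
    using diag by (intro sum.cong refl) (simp add: upper_triangular_mult(2)[OF T T u u] real_sqrt_mult)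
  also have "\<dots> = Re (mtrace T)" unfolding mtrace_def using T by simp
  also have "\<dots> = Re (mtrace R)" using mtrace_similar_mat_wit[OF s] by simp
  finally show ?thesis unfolding R_def .
qed

lemma Re_mtrace_gram: assumes X: "(X::complex mat) \<in> carrier_mat r c"
  shows "Re (mtrace (mat_adjoint X * X)) = (\<Sum>i<c. \<Sum>k<r. (cmod (X$$(k,i)))\<^sup>2)"
proof -
  have "mtrace (mat_adjoint X * X) = (\<Sum>i<c. \<Sum>k<r. cnj (X$$(k,i)) * X$$(k,i))"
    unfolding mtrace_def using X
    by (intro sum.cong) (auto simp: scalar_prod_row_col[OF mat_adjoint_carrier[OF X] X])
  then show ?thesis by (simp only: cnj_mult_self_sum of_real_sum[symmetric] Re_complex_of_real)
qed

text \<open>AM-GM on each singular value: \<open>s \<le> (1 + s\<^sup>2) / 2\<close>.\<close>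

lemma trace_norm_le_frobenius:
  assumes X: "X \<in> carrier_mat r c"
  shows "trace_norm X \<le> (real c + (\<Sum>i<c. \<Sum>k<r. (cmod (X$$(k,i)))\<^sup>2)) / 2"
proof -
  have R: "mat_adjoint X * X \<in> carrier_mat c c" using X by auto
  obtain T P Q where s: "similar_mat_wit (mat_adjoint X * X) T P Q" and u: "upper_triangular T"
    using schur_triangularization[OF R] by metis
  have "trace_norm X = (\<Sum>i<c. sqrt (1 * Re (T$$(i,i))))"
    by (simp add: trace_norm_triangularization(1)[OF X s u])
  also have "\<dots> \<le> (\<Sum>i<c. (1 + Re (T$$(i,i))) / 2)"
    by (intro sum_mono arith_geo_mean_sqrt) (use trace_norm_triangularization(2)[OF X s u] in auto)
  also have "\<dots> = (real c + Re (mtrace T)) / 2"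
    unfolding mtrace_def using similar_mat_witD2[OF R s]
    by (simp add: sum_divide_distrib[symmetric] sum.distrib)
  also have "Re (mtrace T) = Re (mtrace (mat_adjoint X * X))" using mtrace_similar_mat_wit[OF s] by simp
  finally show ?thesis unfolding Re_mtrace_gram[OF X] .
qed

section \<open>Positive semidefinite forms and completely positive maps\<close>

definition qform :: "nat \<Rightarrow> (nat \<Rightarrow> nat \<Rightarrow> complex) \<Rightarrow> (nat \<Rightarrow> complex) \<Rightarrow> complex" where
  "qform m S v = (\<Sum>i<m. \<Sum>j<m. cnj (v i) * S i j * v j)"

definition psd_form :: "nat \<Rightarrow> (nat \<Rightarrow> nat \<Rightarrow> complex) \<Rightarrow> bool" where
  "psd_form m S \<longleftrightarrow> (\<forall>v. Im (qform m S v) = 0 \<and> Re (qform m S v) \<ge> 0)"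

lemma qform_vec:
  assumes A: "A \<in> carrier_mat m m" and v: "v \<in> carrier_vec m"
  shows "(\<Sum>i<m. cnj (v $ i) * (A *\<^sub>v v) $ i) = qform m (\<lambda>i j. A $$ (i,j)) (\<lambda>i. v $ i)"
  unfolding qform_def
  by (intro sum.cong refl) (simp add: mult_mat_vec_sum[OF A v] sum_distrib_left mult.assoc)

lemma qform_cong: "(\<And>i. i < m \<Longrightarrow> v i = w i) \<Longrightarrow> qform m S v = qform m S w"
  unfolding qform_def by (intro sum.cong refl) auto

lemma psd_iff_psd_form: "psd m A \<longleftrightarrow> A \<in> carrier_mat m m \<and> psd_form m (\<lambda>i j. A $$ (i,j))"
proof
  assume p: "psd m A"
  then have A: "A \<in> carrier_mat m m" unfolding psd_def by auto
  show "A \<in> carrier_mat m m \<and> psd_form m (\<lambda>i j. A $$ (i,j))"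
    unfolding psd_form_def
  proof (rule conjI[OF A], intro allI)
    fix f :: "nat \<Rightarrow> complex"
    have v: "vec m f \<in> carrier_vec m" by simp
    have "qform m (\<lambda>i j. A $$ (i,j)) f = qform m (\<lambda>i j. A $$ (i,j)) (\<lambda>i. vec m f $ i)"
      by (rule qform_cong) simp
    also have "\<dots> = (\<Sum>i<m. cnj (vec m f $ i) * (A *\<^sub>v vec m f) $ i)" by (rule qform_vec[OF A v, symmetric])
    finally show "Im (qform m (\<lambda>i j. A $$ (i,j)) f) = 0 \<and> 0 \<le> Re (qform m (\<lambda>i j. A $$ (i,j)) f)"
      using p v unfolding psd_def Let_def by metis
  qed
next
  assume h: "A \<in> carrier_mat m m \<and> psd_form m (\<lambda>i j. A $$ (i,j))"
  show "psd m A" unfolding psd_def Let_def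
  proof (intro conjI ballI)
    show "A \<in> carrier_mat m m" using h by auto
    fix v :: "complex vec" assume v: "v \<in> carrier_vec m"
    have "(\<Sum>i<m. cnj (v $ i) * (A *\<^sub>v v) $ i) = qform m (\<lambda>i j. A $$ (i,j)) (\<lambda>i. v $ i)"
      using h v by (intro qform_vec) auto
    then show "Im (\<Sum>i<m. cnj (v $ i) * (A *\<^sub>v v) $ i) = 0" "0 \<le> Re (\<Sum>i<m. cnj (v $ i) * (A *\<^sub>v v) $ i)"
      using h unfolding psd_form_def by auto
  qed
qed

lemma psd_gram:
  assumes X: "X \<in> carrier_mat r c"
  shows "psd c (mat_adjoint X * X)"
  unfolding psd_def Let_def
proof (intro conjI ballI)
  fix v :: "complex vec" assume v: "v \<in> carrier_vec c"
  show "Im (\<Sum>i<c. cnj (v $ i) * (mat_adjoint X * X *\<^sub>v v) $ i) = 0"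
    "0 \<le> Re (\<Sum>i<c. cnj (v $ i) * (mat_adjoint X * X *\<^sub>v v) $ i)"
    unfolding quadratic_form_gram[OF X v] by (simp_all add: sum_nonneg)
qed (use X in auto)

lemma sum_cnj_delta_mult: "i < (m::nat) \<Longrightarrow> (\<Sum>x<m. cnj (if x = i then a else 0) * f x) = cnj a * f i"
proof -
  assume i: "i < m"
  have "(\<Sum>x<m. cnj (if x = i then a else 0) * f x) = (\<Sum>x<m. if x = i then cnj a * f i else 0)"
    by (intro sum.cong refl) auto
  then show ?thesis using i by simp
qed

lemma sum_mult_delta: "i < (m::nat) \<Longrightarrow> (\<Sum>x<m. f x * (if x = i then a else 0)) = f i * (a::complex)"
proof -
  assume i: "i < m"
  have "(\<Sum>x<m. f x * (if x = i then a else 0)) = (\<Sum>x<m. if x = i then f i * a else 0)"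
    by (intro sum.cong refl) auto
  then show ?thesis using i by simp
qed

lemma sum_sum_delta_mult:
  assumes a: "a < N" and b: "b < (N::nat)"
  shows "(\<Sum>x<N. \<Sum>y<N. (\<alpha> * (if x = a then 1 else 0)) * X x y * cnj (\<beta> * (if y = b then 1 else 0)))
       = \<alpha> * X a b * cnj \<beta>"
proof -
  have inner: "(\<Sum>y<N. (\<alpha> * (if x = a then 1 else 0)) * X x y * cnj (\<beta> * (if y = b then 1 else 0)))
      = (if x = a then \<alpha> * X a b * cnj \<beta> else 0)" for x
  proof (cases "x = a")
    case True
    have "(\<Sum>y<N. (\<alpha> * (if x = a then 1 else 0)) * X x y * cnj (\<beta> * (if y = b then 1 else 0)))
        = (\<Sum>y<N. if y = b then \<alpha> * X a b * cnj \<beta> else 0)"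
      using True by (intro sum.cong refl) auto
    also have "\<dots> = \<alpha> * X a b * cnj \<beta>" using b by simp
    finally show ?thesis using True by simp
  qed simp
  show ?thesis unfolding inner using a by simp
qed

lemma qform_single:
  assumes i: "i < m"
  shows "qform m S (\<lambda>x. if x = i then a else 0) = cnj a * S i i * a"
proof -
  have "qform m S (\<lambda>x. if x = i then a else 0)
      = (\<Sum>x<m. if x = i then (\<Sum>y<m. cnj a * S i y * (if y = i then a else 0)) else 0)"
    unfolding qform_def by (intro sum.cong refl) auto
  also have "\<dots> = (\<Sum>y<m. cnj a * S i y * (if y = i then a else 0))" using i by simp
  also have "\<dots> = cnj a * S i i * a" by (rule sum_mult_delta[OF i])
  finally show ?thesis .
qed

lemma qform_add_single:
  assumes p: "p < m"
  shows "qform m S (\<lambda>x. v x + (if x = p then c else 0)) = qform m S v + cnj c * S p p * c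
   + (\<Sum>i<m. cnj (v i) * S i p) * c + cnj c * (\<Sum>j<m. S p j * v j)"
proof -
  have 1: "(\<Sum>i<m. \<Sum>j<m. cnj (v i) * S i j * (if j = p then c else 0)) = (\<Sum>i<m. cnj (v i) * S i p) * c"
    unfolding sum_mult_delta[OF p] by (simp add: sum_distrib_right)
  have 2: "(\<Sum>i<m. \<Sum>j<m. cnj (if i = p then c else 0) * S i j * v j) = cnj c * (\<Sum>j<m. S p j * v j)"
  proof -
    have "(\<Sum>i<m. \<Sum>j<m. cnj (if i = p then c else 0) * S i j * v j)
        = (\<Sum>i<m. if i = p then (\<Sum>j<m. cnj c * S p j * v j) else 0)"
      by (intro sum.cong refl) auto
    also have "\<dots> = (\<Sum>j<m. cnj c * S p j * v j)" using p by simp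
    finally show ?thesis by (simp add: sum_distrib_left mult.assoc)
  qed
  have "qform m S (\<lambda>x. v x + (if x = p then c else 0)) = qform m S v + qform m S (\<lambda>x. if x = p then c else 0)
      + (\<Sum>i<m. \<Sum>j<m. cnj (v i) * S i j * (if j = p then c else 0))
      + (\<Sum>i<m. \<Sum>j<m. cnj (if i = p then c else 0) * S i j * v j)"
    unfolding qform_def by (simp add: algebra_simps sum.distrib)
  then show ?thesis unfolding 1 2 qform_single[OF p] .
qed

lemma psd_form_diag: "psd_form m S \<Longrightarrow> i < m \<Longrightarrow> Im (S i i) = 0 \<and> Re (S i i) \<ge> 0"
  using qform_single[of i m S 1] unfolding psd_form_def by (metis mult_1 mult_1_right complex_cnj_one)

text \<open>Hermiticity is read off the quadratic form at \<open>e\<^sub>i + e\<^sub>j\<close> and \<open>e\<^sub>i + \<i> e\<^sub>j\<close>.\<close>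

lemma psd_form_hermitian:
  assumes S: "psd_form m S" and i: "i < m" and j: "j < m"
  shows "S j i = cnj (S i j)"
proof (cases "i = j")
  case True
  then show ?thesis using psd_form_diag[OF S i] by (simp add: complex_eq_iff)
next
  case False
  have d: "Im (S i i) = 0" "Im (S j j) = 0" using psd_form_diag[OF S i] psd_form_diag[OF S j] by auto
  have e: "qform m S (\<lambda>x. (if x = i then 1 else 0) + (if x = j then c else 0))
      = S i i + cnj c * S j j * c + S i j * c + cnj c * S j i" for c
    unfolding qform_add_single[OF j] qform_single[OF i] sum_cnj_delta_mult[OF i] sum_mult_delta[OF i]
    by simp
  have Im0: "Im (qform m S v) = 0" for v using S unfolding psd_form_def by blast
  have "Im (S i i + S j j + S i j + S j i) = 0"
    using Im0[of "\<lambda>x. (if x = i then 1 else 0) + (if x = j then 1 else 0)"] e[of 1] by simp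
  moreover have "Im (S i i + S j j + S i j * \<i> - \<i> * S j i) = 0"
    using Im0[of "\<lambda>x. (if x = i then 1 else 0) + (if x = j then \<i> else 0)"] e[of \<i>]
    by (simp add: algebra_simps)
  ultimately show ?thesis using d by (simp add: complex_eq_iff)
qed

lemma psd_form_row_zero:
  assumes S: "psd_form m S" and p: "p < m" and z: "S p p = 0" and j: "j < m"
  shows "S p j = 0"
proof (rule ccontr)
  assume nz: "S p j \<noteq> 0"
  define z where "z = S p j"
  define t where "t = - (Re (S j j) + 1) / (2 * (cmod z)\<^sup>2)"
  have zp: "(cmod z)\<^sup>2 > 0" using nz unfolding z_def by simp
  have h: "S j p = cnj z" unfolding z_def by (rule psd_form_hermitian[OF S p j])
  have "qform m S (\<lambda>x. (if x = j then 1 else 0) + (if x = p then of_real t * z else 0))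
      = S j j + of_real t * (cnj z * z) + of_real t * (cnj z * z)"
    unfolding qform_add_single[OF p] sum_cnj_delta_mult[OF j] sum_mult_delta[OF j] qform_single[OF j]
      z h z_def[symmetric] by (simp add: algebra_simps)
  also have "cnj z * z = of_real ((cmod z)\<^sup>2)" by (metis complex_norm_square mult.commute)
  finally have "Re (qform m S (\<lambda>x. (if x = j then 1 else 0) + (if x = p then of_real t * z else 0)))
      = Re (S j j) + 2 * t * (cmod z)\<^sup>2"
    by simp
  also have "\<dots> < 0" unfolding t_def using zp by (simp add: field_simps)
  finally show False using S unfolding psd_form_def by (metis not_le)
qed

text \<open>One step of a Cholesky factorization: the \<open>p\<close>-th column scaled by \<open>1/\<surd>S\<^sub>p\<^sub>p\<close>
  (or zero if \<open>S\<^sub>p\<^sub>p = 0\<close>, in which case row and column \<open>p\<close> already vanish).\<close>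

definition cholesky_column :: "(nat \<Rightarrow> nat \<Rightarrow> complex) \<Rightarrow> nat \<Rightarrow> nat \<Rightarrow> complex" where
  "cholesky_column S p j = (if S p p = 0 then 0 else S j p / complex_of_real (sqrt (Re (S p p))))"

lemma cholesky_column_nonzero:
  assumes S: "psd_form m S" and p: "p < m" and Spp: "S p p \<noteq> 0"
  obtains r where "r > 0" "S p p = of_real r * of_real r" "\<And>j. cholesky_column S p j = S j p / of_real r"
proof
  have "Im (S p p) = 0" "Re (S p p) \<ge> 0" using psd_form_diag[OF S p] by auto
  then show "sqrt (Re (S p p)) > 0" "S p p = of_real (sqrt (Re (S p p))) * of_real (sqrt (Re (S p p)))"
    using Spp by (simp_all add: complex_eq_iff)
qed (use Spp in \<open>simp add: cholesky_column_def\<close>)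

text \<open>The new form at \<open>v\<close> is the old one at \<open>v + c e\<^sub>p\<close> for a suitable \<open>c\<close>.\<close>

lemma psd_form_sub_cholesky_column:
  assumes S: "psd_form m S" and p: "p < m"
  shows "psd_form m (\<lambda>i j. S i j - cholesky_column S p i * cnj (cholesky_column S p j))"
proof (cases "S p p = 0")
  case True
  then show ?thesis using S by (simp add: cholesky_column_def)
next
  case False
  define u where "u = cholesky_column S p"
  obtain r where rp: "r > 0" and Spp_r: "S p p = of_real r * of_real r" and u: "\<And>j. u j = S j p / of_real r"
    using cholesky_column_nonzero[OF S p False] unfolding u_def by blast
  have herm: "S j p = cnj (S p j)" if "j < m" for j by (rule psd_form_hermitian[OF S p that])
  show ?thesis unfolding u_def[symmetric] psd_form_def
  proof
    fix v
    define g where "g = (\<Sum>j<m. S p j * v j)"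
    define c where "c = - g / (of_real r * of_real r)"
    have hg: "(\<Sum>i<m. cnj (v i) * S i p) = cnj g"
      unfolding g_def cnj_sum using herm by (intro sum.cong refl) simp
    have hu: "(\<Sum>j<m. cnj (u j) * v j) = g / of_real r"
      unfolding g_def sum_divide_distrib u using herm by (intro sum.cong refl) simp
    have hu2: "(\<Sum>i<m. cnj (v i) * u i) = cnj g / of_real r"
      unfolding u hg[symmetric] by (simp add: sum_divide_distrib mult.assoc)
    have "qform m (\<lambda>i j. S i j - u i * cnj (u j)) v
        = qform m S v - (\<Sum>i<m. cnj (v i) * u i) * (\<Sum>j<m. cnj (u j) * v j)"
      unfolding qform_def
      by (simp add: algebra_simps sum_subtractf sum_distrib_left sum_distrib_right) (rule sum.swap)
    also have "\<dots> = qform m S (\<lambda>x. v x + (if x = p then c else 0))"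
      unfolding qform_add_single[OF p] hg g_def[symmetric] hu hu2 c_def Spp_r
      using rp by (simp add: field_simps)
    finally show "Im (qform m (\<lambda>i j. S i j - u i * cnj (u j)) v) = 0
        \<and> 0 \<le> Re (qform m (\<lambda>i j. S i j - u i * cnj (u j)) v)"
      using S unfolding psd_form_def by simp
  qed
qed

lemma cholesky_column_clears:
  assumes S: "psd_form m S" and p: "p < m" and j: "j < m"
  shows "S p j = cholesky_column S p p * cnj (cholesky_column S p j)"
    and "S j p = cholesky_column S p j * cnj (cholesky_column S p p)"
proof (atomize (full), cases "S p p = 0")
  case True
  then show "S p j = cholesky_column S p p * cnj (cholesky_column S p j)
      \<and> S j p = cholesky_column S p j * cnj (cholesky_column S p p)"
    using psd_form_row_zero[OF S p True j] psd_form_hermitian[OF S p j]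
    by (simp add: cholesky_column_def)
next
  case False
  obtain r where "r > 0" "S p p = of_real r * of_real r" "\<And>j. cholesky_column S p j = S j p / of_real r"
    using cholesky_column_nonzero[OF S p False] by blast
  then show "S p j = cholesky_column S p p * cnj (cholesky_column S p j)
      \<and> S j p = cholesky_column S p j * cnj (cholesky_column S p p)"
    using psd_form_hermitian[OF S p j] by simp
qed

lemma psd_form_rank_one_sum_aux:
  assumes "psd_form m S" and "\<forall>i<m. \<forall>j<m. i < m - d \<or> j < m - d \<longrightarrow> S i j = 0"
  shows "\<exists>(L::nat) w. \<forall>a<m. \<forall>b<m. S a b = (\<Sum>l<L. w l a * cnj (w l b))"
  using assms
proof (induction d arbitrary: S)
  case 0
  then show ?case by (intro exI[of _ 0]) auto
next
  case (Suc d)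
  note S = Suc.prems(1)
  show ?case
  proof (cases "d < m")
    case False
    then show ?thesis using Suc by (simp add: Suc_diff_le)
  next
    case True
    define p where "p = m - Suc d"
    define u where "u = cholesky_column S p"
    have p: "p < m" and pd: "m - d = Suc p" using True unfolding p_def by auto
    have zp: "S i j = 0" if "i < m" "j < m" "i < p \<or> j < p" for i j
      using Suc.prems(2) that unfolding p_def by auto
    have "\<forall>i<m. \<forall>j<m. i < m - d \<or> j < m - d \<longrightarrow> S i j - u i * cnj (u j) = 0"
    proof (intro allI impI)
      fix i j assume i: "i < m" and j: "j < m" and "i < m - d \<or> j < m - d"
      then consider "i < p" | "j < p" | "i = p" | "j = p" unfolding pd by linarith
      then show "S i j - u i * cnj (u j) = 0"
        using zp[OF i j] zp[OF i p] zp[OF j p] cholesky_column_clears[OF S p i] cholesky_column_clears[OF S p j]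
        by cases (auto simp: u_def cholesky_column_def)
    qed
    then obtain L :: nat and w where w: "\<forall>a<m. \<forall>b<m. S a b - u a * cnj (u b) = (\<Sum>l<L. w l a * cnj (w l b))"
      using Suc.IH[OF psd_form_sub_cholesky_column[OF S p, folded u_def]] by blast
    show ?thesis
    proof (intro exI[of _ "Suc L"] exI[of _ "\<lambda>l. if l < L then w l else u"] allI impI)
      fix a b assume "a < m" "b < m"
      then show "S a b = (\<Sum>l<Suc L. (if l < L then w l else u) a * cnj ((if l < L then w l else u) b))"
        using w by (simp add: algebra_simps)
    qed
  qed
qed

lemma psd_form_rank_one_sum:
  "psd_form m S \<Longrightarrow> \<exists>(L::nat) w. \<forall>a<m. \<forall>b<m. S a b = (\<Sum>l<L. w l a * cnj (w l b))"
  using psd_form_rank_one_sum_aux[of m S m] by auto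

lemma blk_carrier: "blk n X r s \<in> carrier_mat n n"
  unfolding blk_def by simp

lemma blk_index: "i < n \<Longrightarrow> j < n \<Longrightarrow> blk n X r s $$ (i,j) = X $$ (r*n+i, s*n+j)"
  unfolding blk_def by simp

lemma id_tensor_carrier: "id_tensor k n m \<Phi> X \<in> carrier_mat (k*m) (k*m)"
  unfolding id_tensor_def by simp

lemma id_tensor_index: "i < k * m \<Longrightarrow> j < k * m \<Longrightarrow>
  id_tensor k n m \<Phi> X $$ (i,j) = \<Phi> (blk n X (i div m) (j div m)) $$ (i mod m, j mod m)"
  unfolding id_tensor_def by simp

lemma qform_lessThan_mult:
  "qform (k*m) S v = (\<Sum>r<k. \<Sum>a<m. \<Sum>s<k. \<Sum>b<m. cnj (v (r*m+a)) * S (r*m+a) (s*m+b) * v (s*m+b))"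
  unfolding qform_def sum_lessThan_mult[of _ k m] by (simp add: sum_lessThan_mult[of _ k m])

lemma lin_map_kraus:
  fixes K :: "'c \<Rightarrow> nat \<Rightarrow> nat \<Rightarrow> complex"
  assumes carrier: "\<And>X. X \<in> carrier_mat n n \<Longrightarrow> \<Phi> X \<in> carrier_mat m m"
    and entry: "\<And>X a b. X \<in> carrier_mat n n \<Longrightarrow> a < m \<Longrightarrow> b < m \<Longrightarrow>
      \<Phi> X $$ (a,b) = (\<Sum>c\<in>C. \<Sum>x<n. \<Sum>y<n. K c a x * X$$(x,y) * cnj (K c b y))"
  shows "lin_map n m \<Phi>"
  unfolding lin_map_def
proof (intro conjI ballI allI carrier)
  fix X Y :: "complex mat" and a b :: complex
  assume X: "X \<in> carrier_mat n n" and Y: "Y \<in> carrier_mat n n"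
  have XY: "a \<cdot>\<^sub>m X + b \<cdot>\<^sub>m Y \<in> carrier_mat n n" using X Y by simp
  show "\<Phi> (a \<cdot>\<^sub>m X + b \<cdot>\<^sub>m Y) = a \<cdot>\<^sub>m \<Phi> X + b \<cdot>\<^sub>m \<Phi> Y"
  proof (rule eq_matI)
    fix i j assume "i < dim_row (a \<cdot>\<^sub>m \<Phi> X + b \<cdot>\<^sub>m \<Phi> Y)" and "j < dim_col (a \<cdot>\<^sub>m \<Phi> X + b \<cdot>\<^sub>m \<Phi> Y)"
    then have i: "i < m" and j: "j < m" using carrier[OF X] carrier[OF Y] by auto
    have "\<Phi> (a \<cdot>\<^sub>m X + b \<cdot>\<^sub>m Y) $$ (i,j)
        = (\<Sum>c\<in>C. \<Sum>x<n. \<Sum>y<n. K c i x * (a * X$$(x,y) + b * Y$$(x,y)) * cnj (K c j y))"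
      unfolding entry[OF XY i j] using X Y by (intro sum.cong refl) auto
    also have "\<dots> = a * (\<Sum>c\<in>C. \<Sum>x<n. \<Sum>y<n. K c i x * X$$(x,y) * cnj (K c j y))
        + b * (\<Sum>c\<in>C. \<Sum>x<n. \<Sum>y<n. K c i x * Y$$(x,y) * cnj (K c j y))"
      by (simp add: algebra_simps sum.distrib sum_distrib_left)
    also have "\<dots> = (a \<cdot>\<^sub>m \<Phi> X + b \<cdot>\<^sub>m \<Phi> Y) $$ (i,j)"
      using carrier[OF X] carrier[OF Y] i j by (simp add: entry[OF X i j] entry[OF Y i j])
    finally show "\<Phi> (a \<cdot>\<^sub>m X + b \<cdot>\<^sub>m Y) $$ (i,j) = (a \<cdot>\<^sub>m \<Phi> X + b \<cdot>\<^sub>m \<Phi> Y) $$ (i,j)" .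
  qed (use carrier[OF X] carrier[OF Y] carrier[OF XY] in auto)
qed

text \<open>A map of Kraus form \<open>X \<mapsto> \<Sum>\<^sub>c K\<^sub>c X K\<^sub>c\<^sup>H\<close> is completely positive: the quadratic form of
  \<open>(id \<otimes> \<Phi>) X\<close> at \<open>v\<close> is the sum over \<open>c\<close> of the quadratic forms of \<open>X\<close> at \<open>(1 \<otimes> K\<^sub>c\<^sup>H) v\<close>.\<close>

lemma completely_positive_kraus:
  fixes K :: "'c \<Rightarrow> nat \<Rightarrow> nat \<Rightarrow> complex"
  assumes fin: "finite C"
    and carrier: "\<And>X. X \<in> carrier_mat n n \<Longrightarrow> \<Phi> X \<in> carrier_mat m m"
    and entry: "\<And>X a b. X \<in> carrier_mat n n \<Longrightarrow> a < m \<Longrightarrow> b < m \<Longrightarrow>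
      \<Phi> X $$ (a,b) = (\<Sum>c\<in>C. \<Sum>x<n. \<Sum>y<n. K c a x * X$$(x,y) * cnj (K c b y))"
  shows "completely_positive n m \<Phi>"
  unfolding completely_positive_def
proof (intro conjI allI impI lin_map_kraus[OF carrier entry])
  fix k and X :: "complex mat" assume "psd (k*n) X"
  then have X: "X \<in> carrier_mat (k*n) (k*n)" and psdX: "psd_form (k*n) (\<lambda>i j. X $$ (i,j))"
    unfolding psd_iff_psd_form by auto
  define Y where "Y = id_tensor k n m \<Phi> X"
  have Y: "Y $$ (r*m+a, s*m+b) = (\<Sum>c\<in>C. \<Sum>x<n. \<Sum>y<n. K c a x * X $$ (r*n+x, s*n+y) * cnj (K c b y))"
    if "r < k" "a < m" "s < k" "b < m" for r a s b
    unfolding Y_def using that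
    by (simp add: id_tensor_index mult_add_less_mult entry[OF blk_carrier] blk_index)
  show "psd (k*m) (id_tensor k n m \<Phi> X)"
    unfolding Y_def[symmetric] psd_iff_psd_form psd_form_def
  proof (intro conjI allI)
    show "Y \<in> carrier_mat (k*m) (k*m)" unfolding Y_def by (rule id_tensor_carrier)
    fix v :: "nat \<Rightarrow> complex"
    define w where "w c p = (\<Sum>a<m. cnj (K c a (p mod n)) * v ((p div n)*m + a))" for c p
    have "qform (k*m) (\<lambda>i j. Y $$ (i,j)) v
        = (\<Sum>r<k. \<Sum>a<m. \<Sum>s<k. \<Sum>b<m. cnj (v (r*m+a))
            * (\<Sum>c\<in>C. \<Sum>x<n. \<Sum>y<n. K c a x * X $$ (r*n+x, s*n+y) * cnj (K c b y)) * v (s*m+b))"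
      unfolding qform_lessThan_mult by (intro sum.cong refl) (simp add: Y)
    also have "\<dots> = (\<Sum>c\<in>C. \<Sum>r<k. \<Sum>x<n. \<Sum>s<k. \<Sum>y<n. cnj (\<Sum>a<m. cnj (K c a x) * v (r*m+a))
            * X $$ (r*n+x, s*n+y) * (\<Sum>b<m. cnj (K c b y) * v (s*m+b)))"
      by (simp add: sum_distrib_left sum_distrib_right mult_ac
         sum.swap[of _ "{..<k}" C] sum.swap[of _ "{..<m}" C] sum.swap[of _ "{..<n}" C]
         sum.swap[of _ "{..<m}" "{..<k}"] sum.swap[of _ "{..<m}" "{..<n}"] sum.swap[of _ "{..<k}" "{..<n}"])
    also have "\<dots> = (\<Sum>c\<in>C. qform (k*n) (\<lambda>i j. X $$ (i,j)) (w c))"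
      unfolding qform_lessThan_mult by (intro sum.cong refl) (simp add: w_def)
    finally have eq: "qform (k*m) (\<lambda>i j. Y $$ (i,j)) v = (\<Sum>c\<in>C. qform (k*n) (\<lambda>i j. X $$ (i,j)) (w c))" .
    show "Im (qform (k*m) (\<lambda>i j. Y $$ (i,j)) v) = 0" "0 \<le> Re (qform (k*m) (\<lambda>i j. Y $$ (i,j)) v)"
      unfolding eq using psdX fin by (auto simp: psd_form_def Im_sum Re_sum intro: sum_nonneg)
  qed
qed

lemma completely_positive_psd:
  assumes cp: "completely_positive n m \<Phi>" and X: "psd n X"
  shows "psd m (\<Phi> X)"
proof -
  have Xc: "X \<in> carrier_mat n n" using X unfolding psd_def by auto
  have \<Phi>X: "\<Phi> X \<in> carrier_mat m m" using cp Xc unfolding completely_positive_def lin_map_def by auto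
  have "blk n X 0 0 = X" using Xc by (auto simp: blk_def intro!: eq_matI)
  then have "id_tensor 1 n m \<Phi> X = \<Phi> X"
    using \<Phi>X by (auto simp: id_tensor_index id_tensor_def intro!: eq_matI)
  moreover have "psd (1*n) X" using X by simp
  then have "psd (1*m) (id_tensor 1 n m \<Phi> X)" using cp unfolding completely_positive_def by blast
  ultimately show ?thesis by (metis mult_1)
qed

lemma lin_map_zero: assumes "lin_map n m \<Phi>" shows "\<Phi> (0\<^sub>m n n) = 0\<^sub>m m m"
proof -
  have z: "0\<^sub>m n n \<in> carrier_mat n n" by simp
  have c: "\<Phi> (0\<^sub>m n n) \<in> carrier_mat m m" using assms z unfolding lin_map_def by auto
  have "\<Phi> (0 \<cdot>\<^sub>m 0\<^sub>m n n + 0 \<cdot>\<^sub>m 0\<^sub>m n n) = 0 \<cdot>\<^sub>m \<Phi> (0\<^sub>m n n) + 0 \<cdot>\<^sub>m \<Phi> (0\<^sub>m n n)"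
    using assms z unfolding lin_map_def by blast
  moreover have "0 \<cdot>\<^sub>m 0\<^sub>m n n + 0 \<cdot>\<^sub>m 0\<^sub>m n n = (0\<^sub>m n n :: complex mat)" by (auto intro!: eq_matI)
  moreover have "0 \<cdot>\<^sub>m \<Phi> (0\<^sub>m n n) + 0 \<cdot>\<^sub>m \<Phi> (0\<^sub>m n n) = (0\<^sub>m m m :: complex mat)" using c by (auto intro!: eq_matI)
  ultimately show ?thesis by simp
qed

lemma lin_map_comp: "lin_map a b f \<Longrightarrow> lin_map b c g \<Longrightarrow> lin_map a c (g \<circ> f)"
  unfolding lin_map_def by auto

lemma completely_positive_replacer:
  assumes \<sigma>: "psd m \<sigma>"
  shows "completely_positive n m (\<lambda>\<rho>. mtrace \<rho> \<cdot>\<^sub>m \<sigma>)"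
proof -
  have \<sigma>c: "\<sigma> \<in> carrier_mat m m" using \<sigma> unfolding psd_def by auto
  obtain L :: nat and w where w: "\<forall>a<m. \<forall>b<m. \<sigma> $$ (a,b) = (\<Sum>l<L. w l a * cnj (w l b))"
    using psd_form_rank_one_sum \<sigma> unfolding psd_iff_psd_form by blast
  show ?thesis
  proof (rule completely_positive_kraus[where C = "{..<L} \<times> {..<n}"
        and K = "\<lambda>(l,t) a x. w l a * (if x = t then 1 else 0)"])
    fix X :: "complex mat" and a b assume X: "X \<in> carrier_mat n n" and a: "a < m" and b: "b < m"
    have "(\<Sum>c\<in>{..<L} \<times> {..<n}. \<Sum>x<n. \<Sum>y<n. (case c of (l,t) \<Rightarrow> \<lambda>a x. w l a * (if x = t then 1 else 0)) a x
          * X $$ (x,y) * cnj ((case c of (l,t) \<Rightarrow> \<lambda>a x. w l a * (if x = t then 1 else 0)) b y))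
        = (\<Sum>(l,t)\<in>{..<L} \<times> {..<n}. w l a * X $$ (t, t) * cnj (w l b))"
      by (intro sum.cong refl) (auto intro: sum_sum_delta_mult)
    also have "\<dots> = mtrace X * \<sigma> $$ (a,b)"
      unfolding mtrace_def w[rule_format, OF a b] using X
      by (simp add: sum.cartesian_product[symmetric] sum_distrib_left sum_distrib_right mult_ac
          sum.swap[of _ "{..<n}" "{..<L}"])
    finally show "(mtrace X \<cdot>\<^sub>m \<sigma>) $$ (a, b) = (\<Sum>c\<in>{..<L} \<times> {..<n}. \<Sum>x<n. \<Sum>y<n.
        (case c of (l,t) \<Rightarrow> \<lambda>a x. w l a * (if x = t then 1 else 0)) a x * X $$ (x,y)
        * cnj ((case c of (l,t) \<Rightarrow> \<lambda>a x. w l a * (if x = t then 1 else 0)) b y))"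
      using a b \<sigma>c by simp
  qed (use \<sigma>c in auto)
qed

lemma is_channel_kron:
  assumes \<rho>: "psd n \<rho>" and tr: "mtrace \<rho> = 1"
  shows "is_channel m (n*m) (kron \<rho>)"
  unfolding is_channel_def
proof (intro conjI ballI)
  have \<rho>c: "\<rho> \<in> carrier_mat n n" using \<rho> unfolding psd_def by auto
  obtain L :: nat and w where w: "\<forall>a<n. \<forall>b<n. \<rho> $$ (a,b) = (\<Sum>l<L. w l a * cnj (w l b))"
    using psd_form_rank_one_sum \<rho> unfolding psd_iff_psd_form by blast
  show "completely_positive m (n*m) (kron \<rho>)"
  proof (rule completely_positive_kraus[where C = "{..<L}"
        and K = "\<lambda>l i x. w l (i div m) * (if x = i mod m then 1 else 0)"])
    fix X :: "complex mat" and i j assume X: "X \<in> carrier_mat m m" and i: "i < n*m" and j: "j < n*m"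
    have "(\<Sum>l<L. \<Sum>x<m. \<Sum>y<m. w l (i div m) * (if x = i mod m then 1 else 0) * X $$ (x,y)
          * cnj (w l (j div m) * (if y = j mod m then 1 else 0)))
        = (\<Sum>l<L. w l (i div m) * X $$ (i mod m, j mod m) * cnj (w l (j div m)))"
      using i j by (intro sum.cong refl sum_sum_delta_mult) (auto simp: mod_less_of_less_mult)
    also have "\<dots> = (\<Sum>l<L. w l (i div m) * cnj (w l (j div m))) * X $$ (i mod m, j mod m)"
      by (subst sum_distrib_right) (simp add: mult_ac)
    also have "\<dots> = kron \<rho> X $$ (i,j)"
      using i j X \<rho>c w by (simp add: kron_index div_less_of_less_mult)
    finally show "kron \<rho> X $$ (i,j) = (\<Sum>l\<in>{..<L}. \<Sum>x<m. \<Sum>y<m.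
        w l (i div m) * (if x = i mod m then 1 else 0) * X $$ (x,y) * cnj (w l (j div m) * (if y = j mod m then 1 else 0)))"
      by simp
  qed (use \<rho>c in \<open>auto intro: kron_carrier\<close>)
  fix X :: "complex mat" assume "X \<in> carrier_mat m m"
  then show "mtrace (kron \<rho> X) = mtrace X" using mtrace_kron[OF \<rho>c] tr by simp
qed

definition ptrace_left :: "nat \<Rightarrow> nat \<Rightarrow> complex mat \<Rightarrow> complex mat" where
  "ptrace_left n m Y = mat m m (\<lambda>(a,b). \<Sum>r<n. Y $$ (r*m+a, r*m+b))"

lemma is_channel_ptrace_left: "is_channel (n*m) m (ptrace_left n m)"
  unfolding is_channel_def
proof (intro conjI ballI)
  show "completely_positive (n*m) m (ptrace_left n m)"
  proof (rule completely_positive_kraus[where C = "{..<n}" and K = "\<lambda>r a x. if x = r*m+a then 1 else 0"])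
    fix X :: "complex mat" and a b assume a: "a < m" and b: "b < m"
    have "(\<Sum>x<n*m. \<Sum>y<n*m. (if x = r*m+a then 1 else 0) * X $$ (x,y) * cnj (if y = r*m+b then 1 else 0))
        = X $$ (r*m+a, r*m+b)" if "r < n" for r
      using sum_sum_delta_mult[of "r*m+a" "n*m" "r*m+b" 1 "\<lambda>x y. X $$ (x,y)" 1] that a b
      by (simp add: mult_add_less_mult)
    then show "ptrace_left n m X $$ (a,b) = (\<Sum>r\<in>{..<n}. \<Sum>x<n*m. \<Sum>y<n*m.
        (if x = r*m+a then 1 else 0) * X $$ (x,y) * cnj (if y = r*m+b then 1 else 0))"
      unfolding ptrace_left_def using a b by simp
  qed (auto simp: ptrace_left_def)
  fix X :: "complex mat" assume X: "X \<in> carrier_mat (n*m) (n*m)"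
  have "mtrace (ptrace_left n m X) = (\<Sum>r<n. \<Sum>a<m. X $$ (r*m+a, r*m+a))"
    unfolding mtrace_def ptrace_left_def by (simp add: sum.swap[of _ "{..<m}"])
  also have "\<dots> = (\<Sum>i<n*m. X $$ (i, i))" by (rule sum_lessThan_mult[symmetric])
  also have "\<dots> = mtrace X" unfolding mtrace_def using X by simp
  finally show "mtrace (ptrace_left n m X) = mtrace X" .
qed

lemma ptrace_left_kron:
  assumes A: "A \<in> carrier_mat n n" and Z: "Z \<in> carrier_mat m m"
  shows "ptrace_left n m (kron A Z) = mtrace A \<cdot>\<^sub>m Z"
  by (rule eq_matI)
    (use A Z in \<open>auto simp: ptrace_left_def mtrace_def kron_index_block[OF A Z] sum_distrib_right\<close>)

section \<open>Pure inputs and the partial transpose\<close>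

lemma dim_pure_dm: "dim_row (pure_dm \<psi>) = dim_vec \<psi>"
  unfolding pure_dm_def by simp

lemma pure_dm_carrier: "\<psi> \<in> carrier_vec N \<Longrightarrow> pure_dm \<psi> \<in> carrier_mat N N"
  unfolding pure_dm_def by simp

lemma pure_dm_index: "i < dim_vec \<psi> \<Longrightarrow> j < dim_vec \<psi> \<Longrightarrow> pure_dm \<psi> $$ (i,j) = \<psi> $ i * cnj (\<psi> $ j)"
  unfolding pure_dm_def by simp

lemma pure_dm_unit_vec_0_index:
  "i < N \<Longrightarrow> j < N \<Longrightarrow> pure_dm (unit_vec N 0 :: complex vec) $$ (i,j) = (if i = 0 \<and> j = 0 then 1 else 0)"
  by (simp add: pure_dm_index unit_vec_def)

lemma unit_vec_0_in_unit_vecs: "0 < N \<Longrightarrow> unit_vec N 0 \<in> unit_vecs N"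
proof -
  assume N: "0 < N"
  have "(\<Sum>i<N. (cmod (unit_vec N 0 $ i))\<^sup>2) = (\<Sum>i<N. if i = 0 then 1 else 0)"
    by (intro sum.cong refl) (auto simp: unit_vec_def)
  also have "\<dots> = 1" using N by simp
  finally show ?thesis unfolding unit_vecs_def by simp
qed

lemma unit_vecs_index_le_1: assumes "\<psi> \<in> unit_vecs N" "i < N" shows "cmod (\<psi> $ i) \<le> 1"
proof -
  have "(cmod (\<psi> $ i))\<^sup>2 \<le> (\<Sum>j<N. (cmod (\<psi> $ j))\<^sup>2)"
    by (rule member_le_sum) (use assms(2) in auto)
  also have "\<dots> = 1" using assms(1) unfolding unit_vecs_def by simp
  finally show ?thesis by (simp add: power_le_one_iff abs_le_square_iff)
qed

text \<open>The state of the reference system \<open>S\<^sub>AS\<^sub>B\<close> left by a pure input \<open>\<psi>\<close> on \<open>S\<^sub>AS\<^sub>B \<otimes> A'B'\<close>.\<close>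

definition reduced_state :: "nat \<Rightarrow> complex vec \<Rightarrow> complex mat" where
  "reduced_state n \<psi> = mat n n (\<lambda>(r,s). \<Sum>t<n. \<psi> $ (r*n+t) * cnj (\<psi> $ (s*n+t)))"

lemma reduced_state_carrier: "reduced_state n \<psi> \<in> carrier_mat n n"
  unfolding reduced_state_def by simp

lemma reduced_state_gram:
  "reduced_state n \<psi> = mat_adjoint (mat n n (\<lambda>(t,s). cnj (\<psi> $ (s*n+t)))) * mat n n (\<lambda>(t,s). cnj (\<psi> $ (s*n+t)))"
  (is "_ = mat_adjoint ?W * ?W")
proof (rule eq_matI)
  have W: "?W \<in> carrier_mat n n" by simp
  fix i j assume "i < dim_row (mat_adjoint ?W * ?W)" and "j < dim_col (mat_adjoint ?W * ?W)"
  then have i: "i < n" and j: "j < n" by auto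
  show "reduced_state n \<psi> $$ (i, j) = (mat_adjoint ?W * ?W) $$ (i, j)"
    unfolding mult_mat_sum[OF mat_adjoint_carrier[OF W] W i j] reduced_state_def
    using i j by (auto intro: sum.cong)
qed (auto simp: reduced_state_def)

lemma psd_reduced_state: "psd n (reduced_state n \<psi>)"
  unfolding reduced_state_gram by (rule psd_gram[where r = n]) simp

lemma mtrace_reduced_state: assumes "\<psi> \<in> unit_vecs (n*n)" shows "mtrace (reduced_state n \<psi>) = 1"
proof -
  have "mtrace (reduced_state n \<psi>) = (\<Sum>i<n*n. cnj (\<psi> $ i) * \<psi> $ i)"
    unfolding mtrace_def reduced_state_def sum_lessThan_mult by (simp add: mult.commute)
  also have "\<dots> = 1" using assms unfolding cnj_mult_self_sum unit_vecs_def by simp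
  finally show ?thesis .
qed

lemma trace_norm_reduced_state: assumes "\<psi> \<in> unit_vecs (n*n)" shows "trace_norm (reduced_state n \<psi>) = 1"
  using trace_norm_gram[of "mat n n (\<lambda>(t,s). cnj (\<psi> $ (s*n+t)))" n n] mtrace_reduced_state[OF assms]
  unfolding reduced_state_gram[symmetric] by simp

lemma id_tensor_replacer:
  assumes Z: "Z \<in> carrier_mat m m" and \<psi>: "\<psi> \<in> carrier_vec (n*n)"
    and \<Phi>: "\<And>Y. Y \<in> carrier_mat n n \<Longrightarrow> \<Phi> Y = mtrace Y \<cdot>\<^sub>m Z"
  shows "id_tensor n n m \<Phi> (pure_dm \<psi>) = kron (reduced_state n \<psi>) Z"
proof (rule eq_matI)
  fix i j assume "i < dim_row (kron (reduced_state n \<psi>) Z)" and "j < dim_col (kron (reduced_state n \<psi>) Z)"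
  then have i: "i < n*m" and j: "j < n*m" using Z by (auto simp: reduced_state_def)
  have idx: "i div m < n" "j div m < n" "i mod m < m" "j mod m < m"
    using i j by (auto simp: div_less_of_less_mult mod_less_of_less_mult)
  have "mtrace (blk n (pure_dm \<psi>) (i div m) (j div m)) = reduced_state n \<psi> $$ (i div m, j div m)"
    unfolding mtrace_def blk_def reduced_state_def using idx \<psi>
    by (auto intro!: sum.cong simp: pure_dm_index mult_add_less_mult)
  then show "id_tensor n n m \<Phi> (pure_dm \<psi>) $$ (i, j) = kron (reduced_state n \<psi>) Z $$ (i, j)"
    using i j Z idx by (simp add: id_tensor_index \<Phi>[OF blk_carrier] kron_index reduced_state_def)
qed (use Z in \<open>auto simp: id_tensor_def reduced_state_def\<close>)

lemma blk_pure_dm_unit_vec_0: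
  assumes n: "0 < n" and r: "r < n" and s: "s < n"
  shows "blk n (pure_dm (unit_vec (n*n) 0 :: complex vec)) r s
       = (if r = 0 \<and> s = 0 then pure_dm (unit_vec n 0) else 0\<^sub>m n n)"
proof (rule eq_matI)
  fix c d assume "c < dim_row (if r = 0 \<and> s = 0 then pure_dm (unit_vec n 0 :: complex vec) else 0\<^sub>m n n)"
    and "d < dim_col (if r = 0 \<and> s = 0 then pure_dm (unit_vec n 0 :: complex vec) else 0\<^sub>m n n)"
  then have c: "c < n" and d: "d < n" by (auto simp: pure_dm_def split: if_splits)
  have "r*n+c = 0 \<longleftrightarrow> r = 0 \<and> c = 0" "s*n+d = 0 \<longleftrightarrow> s = 0 \<and> d = 0" using n by auto
  then show "blk n (pure_dm (unit_vec (n*n) 0 :: complex vec)) r s $$ (c, d)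
      = (if r = 0 \<and> s = 0 then pure_dm (unit_vec n 0) else 0\<^sub>m n n) $$ (c, d)"
    using c d r s by (auto simp: blk_index pure_dm_unit_vec_0_index mult_add_less_mult)
qed (auto simp: blk_def pure_dm_def)

lemma id_tensor_pure_dm_unit_vec_0:
  assumes lin: "lin_map n m \<Phi>" and n: "0 < n"
  defines "E \<equiv> pure_dm (unit_vec n 0 :: complex vec)"
  shows "id_tensor n n m \<Phi> (pure_dm (unit_vec (n*n) 0)) = kron E (\<Phi> E)"
proof (rule eq_matI)
  have E: "E \<in> carrier_mat n n" unfolding E_def by (simp add: pure_dm_carrier)
  then have \<Phi>E: "\<Phi> E \<in> carrier_mat m m" using lin unfolding lin_map_def by auto
  fix i j assume "i < dim_row (kron E (\<Phi> E))" and "j < dim_col (kron E (\<Phi> E))"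
  then have i: "i < n*m" and j: "j < n*m" using E \<Phi>E by auto
  have idx: "i div m < n" "j div m < n" "i mod m < m" "j mod m < m"
    using i j by (auto simp: div_less_of_less_mult mod_less_of_less_mult)
  show "id_tensor n n m \<Phi> (pure_dm (unit_vec (n*n) 0)) $$ (i,j) = kron E (\<Phi> E) $$ (i,j)"
    using i j idx E \<Phi>E lin_map_zero[OF lin]
    by (simp add: id_tensor_index blk_pure_dm_unit_vec_0[OF n] kron_index E_def pure_dm_unit_vec_0_index)
qed (use lin in \<open>auto simp: id_tensor_def E_def pure_dm_def lin_map_def\<close>)

lemma ptrans_carrier: "ptrans dX dY M \<in> carrier_mat (dX*dY) (dX*dY)"
  unfolding ptrans_def by simp

lemma ptrans_index_less: "i < dX*dY \<Longrightarrow> j < dX*dY \<Longrightarrow> (i div dY)*dY + j mod dY < dX*(dY::nat)"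
  by (intro mult_add_less_mult) (auto simp: div_less_of_less_mult mod_less_of_less_mult)

lemma mtrace_ptrans: "dim_row M = dX*dY \<Longrightarrow> mtrace (ptrans dX dY M) = mtrace M"
  unfolding mtrace_def ptrans_def by simp

lemma ptrans_smult:
  "M \<in> carrier_mat (dX*dY) (dX*dY) \<Longrightarrow> ptrans dX dY (c \<cdot>\<^sub>m M) = c \<cdot>\<^sub>m ptrans dX dY M"
  by (rule eq_matI) (auto simp: ptrans_def ptrans_index_less)

lemma lin_map_ptrans: "lin_map (dX*dY) (dX*dY) (ptrans dX dY)"
  unfolding lin_map_def by (auto simp: ptrans_carrier ptrans_def ptrans_index_less intro!: eq_matI)

lemma ptrans_pure_dm_unit_vec_0:
  assumes dY: "0 < dY"
  shows "ptrans dX dY (pure_dm (unit_vec (dX*dY) 0 :: complex vec)) = pure_dm (unit_vec (dX*dY) 0)"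
proof (rule eq_matI)
  fix i j assume "i < dim_row (pure_dm (unit_vec (dX*dY) 0 :: complex vec))"
    and "j < dim_col (pure_dm (unit_vec (dX*dY) 0 :: complex vec))"
  then have i: "i < dX*dY" and j: "j < dX*dY" by (auto simp: pure_dm_def)
  have "(i div dY) * dY + j mod dY = 0 \<and> (j div dY) * dY + i mod dY = 0 \<longleftrightarrow> i = 0 \<and> j = 0"
    using dY by (auto simp: div_eq_0_iff)
  then show "ptrans dX dY (pure_dm (unit_vec (dX*dY) 0 :: complex vec)) $$ (i, j)
      = pure_dm (unit_vec (dX*dY) 0 :: complex vec) $$ (i, j)"
    using i j ptrans_index_less[OF i j] ptrans_index_less[OF j i]
    by (simp add: ptrans_def pure_dm_unit_vec_0_index)
qed (auto simp: ptrans_def pure_dm_def)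

section \<open>The diamond norm\<close>

definition matrix_unit :: "nat \<Rightarrow> nat \<times> nat \<Rightarrow> complex mat" where
  "matrix_unit n p = mat n n (\<lambda>ij. if ij = p then 1 else 0)"

lemma lin_map_expand_aux:
  assumes lin: "lin_map n m \<Phi>" and fin: "finite F" and sub: "F \<subseteq> {..<n} \<times> {..<n}"
    and a: "a < m" and b: "b < m"
  shows "\<Phi> (mat n n (\<lambda>p. if p \<in> F then Y $$ p else 0)) $$ (a,b)
       = (\<Sum>p\<in>F. Y $$ p * \<Phi> (matrix_unit n p) $$ (a,b))"
  using fin sub
proof (induction F rule: finite_induct)
  case empty
  have "mat n n (\<lambda>p. if p \<in> {} then Y $$ p else 0) = 0\<^sub>m n n" by (auto intro!: eq_matI)
  then show ?case using lin_map_zero[OF lin] a b by auto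
next
  case (insert p F)
  let ?YF = "mat n n (\<lambda>p. if p \<in> F then Y $$ p else 0)"
  have eq: "mat n n (\<lambda>q. if q \<in> insert p F then Y $$ q else 0) = 1 \<cdot>\<^sub>m ?YF + Y $$ p \<cdot>\<^sub>m matrix_unit n p"
    using insert.hyps(2) by (auto intro!: eq_matI simp: matrix_unit_def)
  have c: "?YF \<in> carrier_mat n n" "matrix_unit n p \<in> carrier_mat n n" by (auto simp: matrix_unit_def)
  then have "\<Phi> (1 \<cdot>\<^sub>m ?YF + Y $$ p \<cdot>\<^sub>m matrix_unit n p) = 1 \<cdot>\<^sub>m \<Phi> ?YF + Y $$ p \<cdot>\<^sub>m \<Phi> (matrix_unit n p)"
    "\<Phi> ?YF \<in> carrier_mat m m" "\<Phi> (matrix_unit n p) \<in> carrier_mat m m"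
    using lin unfolding lin_map_def by auto
  then show ?case
    unfolding eq using insert a b by (simp add: add.commute)
qed

lemma lin_map_entry_bound:
  assumes lin: "lin_map n m \<Phi>"
  obtains B where "\<And>Y a b. Y \<in> carrier_mat n n \<Longrightarrow> (\<forall>c<n. \<forall>d<n. cmod (Y $$ (c,d)) \<le> 1)
      \<Longrightarrow> a < m \<Longrightarrow> b < m \<Longrightarrow> cmod (\<Phi> Y $$ (a,b)) \<le> B"
proof
  define B where "B = (\<Sum>a<m. \<Sum>b<m. \<Sum>p\<in>{..<n} \<times> {..<n}. cmod (\<Phi> (matrix_unit n p) $$ (a,b)))"
  fix Y a b assume Y: "Y \<in> carrier_mat n n" and Yb: "\<forall>c<n. \<forall>d<n. cmod (Y $$ (c,d)) \<le> 1"
    and a: "a < m" and b: "b < m"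
  have "mat n n (\<lambda>p. if p \<in> {..<n} \<times> {..<n} then Y $$ p else 0) = Y" using Y by (auto intro!: eq_matI)
  then have "cmod (\<Phi> Y $$ (a,b)) = cmod (\<Sum>p\<in>{..<n} \<times> {..<n}. Y $$ p * \<Phi> (matrix_unit n p) $$ (a,b))"
    using lin_map_expand_aux[OF lin _ subset_refl a b, of Y] by simp
  also have "\<dots> \<le> (\<Sum>p\<in>{..<n} \<times> {..<n}. cmod (\<Phi> (matrix_unit n p) $$ (a,b)))"
    using Yb by (intro order.trans[OF norm_sum] sum_mono)
      (auto simp: norm_mult intro!: mult_left_le_one_le)
  also have "\<dots> \<le> (\<Sum>b'<m. \<Sum>p\<in>{..<n} \<times> {..<n}. cmod (\<Phi> (matrix_unit n p) $$ (a,b')))"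
    using b by (intro member_le_sum[where f = "\<lambda>b'. \<Sum>p\<in>_. cmod (\<Phi> (matrix_unit n p) $$ (a,b'))"])
      (auto intro!: sum_nonneg)
  also have "\<dots> \<le> B"
    unfolding B_def using a by (intro member_le_sum) (auto intro!: sum_nonneg)
  finally show "cmod (\<Phi> Y $$ (a,b)) \<le> B" .
qed

lemma bdd_above_diamond:
  assumes lin: "lin_map n m P"
  shows "bdd_above ((\<lambda>\<psi>. trace_norm (id_tensor n n m P (pure_dm \<psi>))) ` unit_vecs (n*n))"
proof -
  obtain B where B: "\<And>Y a b. Y \<in> carrier_mat n n \<Longrightarrow> (\<forall>c<n. \<forall>d<n. cmod (Y $$ (c,d)) \<le> 1)
      \<Longrightarrow> a < m \<Longrightarrow> b < m \<Longrightarrow> cmod (P Y $$ (a,b)) \<le> B"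
    using lin_map_entry_bound[OF lin] by blast
  show ?thesis
  proof (rule bdd_aboveI2)
    fix \<psi> assume \<psi>: "\<psi> \<in> unit_vecs (n*n)"
    have \<psi>c: "\<psi> \<in> carrier_vec (n*n)" using \<psi> unfolding unit_vecs_def by auto
    define X where "X = id_tensor n n m P (pure_dm \<psi>)"
    have entry: "cmod (X $$ (k,i)) \<le> B" if k: "k < n*m" and i: "i < n*m" for k i
    proof -
      have idx: "k div m < n" "i div m < n" "k mod m < m" "i mod m < m"
        using i k by (auto simp: div_less_of_less_mult mod_less_of_less_mult)
      have "cmod (blk n (pure_dm \<psi>) (k div m) (i div m) $$ (c,d)) \<le> 1" if "c < n" "d < n" for c d
        using unit_vecs_index_le_1[OF \<psi>, of "(k div m)*n + c"] unit_vecs_index_le_1[OF \<psi>, of "(i div m)*n + d"]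
          that idx \<psi>c
        by (simp add: blk_index pure_dm_index norm_mult mult_add_less_mult mult_le_one)
      then show ?thesis
        unfolding X_def using B[OF blk_carrier _ idx(3,4)] k i by (simp add: id_tensor_index)
    qed
    have "trace_norm X \<le> (real (n*m) + (\<Sum>i<n*m. \<Sum>k<n*m. (cmod (X$$(k,i)))\<^sup>2)) / 2"
      unfolding X_def by (rule trace_norm_le_frobenius[OF id_tensor_carrier])
    also have "\<dots> \<le> (real (n*m) + (\<Sum>i<n*m. \<Sum>k<n*m. B\<^sup>2)) / 2"
      using entry by (intro divide_right_mono add_left_mono sum_mono power_mono) auto
    finally show "trace_norm (id_tensor n n m P (pure_dm \<psi>)) \<le> (real (n*m) + (\<Sum>i<n*m. \<Sum>k<n*m. B\<^sup>2)) / 2"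
      unfolding X_def .
  qed
qed

lemma trace_norm_le_diamond_norm:
  "lin_map n m P \<Longrightarrow> \<psi> \<in> unit_vecs (n*n) \<Longrightarrow> trace_norm (id_tensor n n m P (pure_dm \<psi>)) \<le> diamond_norm n m P"
  unfolding diamond_norm_def by (rule cSup_upper[OF imageI bdd_above_diamond])

section \<open>Replacer channels\<close>

lemma pure_dm_gram:
  "pure_dm \<psi> = mat_adjoint (mat 1 (dim_vec \<psi>) (\<lambda>(_,j). cnj (\<psi> $ j))) * mat 1 (dim_vec \<psi>) (\<lambda>(_,j). cnj (\<psi> $ j))"
  (is "_ = mat_adjoint ?W * ?W")
proof (rule eq_matI)
  have W: "?W \<in> carrier_mat 1 (dim_vec \<psi>)" by simp
  fix i j assume "i < dim_row (mat_adjoint ?W * ?W)" and "j < dim_col (mat_adjoint ?W * ?W)"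
  then have i: "i < dim_vec \<psi>" and j: "j < dim_vec \<psi>" by auto
  show "pure_dm \<psi> $$ (i, j) = (mat_adjoint ?W * ?W) $$ (i, j)"
    unfolding mult_mat_sum[OF mat_adjoint_carrier[OF W] W i j] using i j by (simp add: pure_dm_index)
qed (auto simp: pure_dm_def)

lemma psd_pure_dm: "\<psi> \<in> carrier_vec N \<Longrightarrow> psd N (pure_dm \<psi>)"
  unfolding pure_dm_gram by (rule psd_gram) auto

lemma mtrace_pure_dm_unit_vec_0:
  assumes "0 < N" shows "mtrace (pure_dm (unit_vec N 0 :: complex vec)) = 1"
proof -
  have "mtrace (pure_dm (unit_vec N 0 :: complex vec)) = (\<Sum>i<N. if i = 0 then 1 else 0)"
    unfolding mtrace_def by (intro sum.cong) (simp_all add: pure_dm_unit_vec_0_index dim_pure_dm)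
  then show ?thesis using assms by simp
qed

lemma trace_norm_pure_dm_unit_vec_0: "0 < N \<Longrightarrow> trace_norm (pure_dm (unit_vec N 0 :: complex vec)) = 1"
  using trace_norm_gram[of "mat 1 N (\<lambda>(_,j). cnj (unit_vec N 0 $ j))" 1 N] mtrace_pure_dm_unit_vec_0[of N]
  unfolding pure_dm_gram[symmetric] by (simp add: pure_dm_gram)

lemma diamond_norm_replacer:
  assumes Z: "Z \<in> carrier_mat (dA*dB) (dA*dB)" and n: "0 < dA'*dB'"
  shows "diamond_norm (dA'*dB') (dA*dB) (ptrans dA dB \<circ> (\<lambda>\<rho>. mtrace \<rho> \<cdot>\<^sub>m Z) \<circ> ptrans dA' dB')
       = trace_norm (ptrans dA dB Z)"
proof -
  let ?n = "dA'*dB'" and ?m = "dA*dB"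
  let ?P = "ptrans dA dB \<circ> (\<lambda>\<rho>. mtrace \<rho> \<cdot>\<^sub>m Z) \<circ> ptrans dA' dB'"
  have "trace_norm (id_tensor ?n ?n ?m ?P (pure_dm \<psi>)) = trace_norm (ptrans dA dB Z)"
    if \<psi>: "\<psi> \<in> unit_vecs (?n*?n)" for \<psi>
  proof -
    have "id_tensor ?n ?n ?m ?P (pure_dm \<psi>) = kron (reduced_state ?n \<psi>) (ptrans dA dB Z)"
      using \<psi> Z by (intro id_tensor_replacer ptrans_carrier)
        (auto simp: unit_vecs_def mtrace_ptrans ptrans_smult)
    then show ?thesis
      using trace_norm_kron[OF reduced_state_carrier ptrans_carrier] trace_norm_reduced_state[OF \<psi>] by simp
  qed
  moreover have "unit_vecs (?n*?n) \<noteq> {}" using unit_vec_0_in_unit_vecs[of "?n*?n"] n by auto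
  ultimately have "(\<lambda>\<psi>. trace_norm (id_tensor ?n ?n ?m ?P (pure_dm \<psi>))) ` unit_vecs (?n*?n)
      = {trace_norm (ptrans dA dB Z)}"
    by auto
  then show ?thesis unfolding diamond_norm_def by simp
qed

lemma EN_map_replacer:
  assumes "Z \<in> carrier_mat (dA*dB) (dA*dB)" and "0 < dA'*dB'"
  shows "EN_map dA' dB' dA dB (\<lambda>\<rho>. mtrace \<rho> \<cdot>\<^sub>m Z) = EN_state dA dB Z"
  unfolding EN_map_def EN_state_def diamond_norm_replacer[OF assms] ..

lemma chan_div_replacer_le:
  assumes D: "gen_divergence D" and \<omega>: "is_state m \<omega>" and \<sigma>: "psd m \<sigma>"
  shows "chan_div D n m (\<lambda>\<rho>. mtrace \<rho> \<cdot>\<^sub>m \<omega>) (\<lambda>\<rho>. mtrace \<rho> \<cdot>\<^sub>m \<sigma>) \<le> D \<omega> \<sigma>"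
  unfolding chan_div_def
proof (rule SUP_least)
  fix \<psi> assume \<psi>: "\<psi> \<in> unit_vecs (n*n)"
  have \<psi>c: "\<psi> \<in> carrier_vec (n*n)" using \<psi> unfolding unit_vecs_def by auto
  have "\<omega> \<in> carrier_mat m m" "\<sigma> \<in> carrier_mat m m" using \<omega> \<sigma> unfolding is_state_def psd_def by auto
  then have "id_tensor n n m (\<lambda>\<rho>. mtrace \<rho> \<cdot>\<^sub>m \<omega>) (pure_dm \<psi>) = kron (reduced_state n \<psi>) \<omega>"
    "id_tensor n n m (\<lambda>\<rho>. mtrace \<rho> \<cdot>\<^sub>m \<sigma>) (pure_dm \<psi>) = kron (reduced_state n \<psi>) \<sigma>"
    by (auto intro: id_tensor_replacer[OF _ \<psi>c])
  moreover have "is_channel m (n*m) (kron (reduced_state n \<psi>))"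
    by (rule is_channel_kron[OF psd_reduced_state mtrace_reduced_state[OF \<psi>]])
  ultimately show "D (id_tensor n n m (\<lambda>\<rho>. mtrace \<rho> \<cdot>\<^sub>m \<omega>) (pure_dm \<psi>))
      (id_tensor n n m (\<lambda>\<rho>. mtrace \<rho> \<cdot>\<^sub>m \<sigma>) (pure_dm \<psi>)) \<le> D \<omega> \<sigma>"
    using D \<omega> \<sigma> unfolding gen_divergence_def by simp
qed

lemma D_le_chan_div_replacer:
  assumes D: "gen_divergence D" and \<omega>: "is_state m \<omega>"
    and M: "completely_positive n m M" and n: "0 < n"
  shows "D \<omega> (M (pure_dm (unit_vec n 0))) \<le> chan_div D n m (\<lambda>\<rho>. mtrace \<rho> \<cdot>\<^sub>m \<omega>) M"
proof -
  define E where "E = pure_dm (unit_vec n 0 :: complex vec)"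
  define \<psi> where "\<psi> = (unit_vec (n*n) 0 :: complex vec)"
  have \<omega>p: "psd m \<omega>" and \<omega>c: "\<omega> \<in> carrier_mat m m" using \<omega> unfolding is_state_def psd_def by auto
  have Ep: "psd n E" and Et: "mtrace E = 1" and Ec: "E \<in> carrier_mat n n"
    unfolding E_def using mtrace_pure_dm_unit_vec_0[OF n] by (auto simp: psd_pure_dm pure_dm_carrier)
  have \<sigma>: "psd m (M E)" by (rule completely_positive_psd[OF M Ep])
  have \<sigma>c: "M E \<in> carrier_mat m m" using \<sigma> unfolding psd_def by simp
  have N: "completely_positive n m (\<lambda>\<rho>. mtrace \<rho> \<cdot>\<^sub>m \<omega>)"
    by (rule completely_positive_replacer[OF \<omega>p])
  have "1 \<cdot>\<^sub>m \<omega> = \<omega>" using \<omega>c by (auto intro!: eq_matI)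
  then have outN: "id_tensor n n m (\<lambda>\<rho>. mtrace \<rho> \<cdot>\<^sub>m \<omega>) (pure_dm \<psi>) = kron E \<omega>"
    using id_tensor_pure_dm_unit_vec_0[OF _ n] N Et
    unfolding \<psi>_def E_def[symmetric] completely_positive_def by simp
  have outM: "id_tensor n n m M (pure_dm \<psi>) = kron E (M E)"
    using id_tensor_pure_dm_unit_vec_0[OF _ n] M unfolding \<psi>_def E_def[symmetric] completely_positive_def by simp
  have kron_channel: "is_channel m (n*m) (kron E)" by (rule is_channel_kron[OF Ep Et])
  have "psd (n*m) (kron E \<omega>)" "psd (n*m) (kron E (M E))"
    using completely_positive_psd[OF _ \<omega>p] completely_positive_psd[OF _ \<sigma>] kron_channel
    unfolding is_channel_def by blast+
  moreover have "mtrace (kron E \<omega>) = 1"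
    using mtrace_kron[OF Ec \<omega>c] Et \<omega> unfolding is_state_def by simp
  ultimately have "D (ptrace_left n m (kron E \<omega>)) (ptrace_left n m (kron E (M E))) \<le> D (kron E \<omega>) (kron E (M E))"
    using D is_channel_ptrace_left unfolding gen_divergence_def is_state_def by blast
  moreover have "ptrace_left n m (kron E X) = X" if "X \<in> carrier_mat m m" for X
    using ptrace_left_kron[OF Ec that] Et that by (auto intro!: eq_matI)
  ultimately have "D \<omega> (M E) \<le> D (kron E \<omega>) (kron E (M E))" using \<omega>c \<sigma>c by simp
  also have "\<dots> \<le> chan_div D n m (\<lambda>\<rho>. mtrace \<rho> \<cdot>\<^sub>m \<omega>) M"
    unfolding chan_div_def outN[symmetric] outM[symmetric]
    using unit_vec_0_in_unit_vecs[of "n*n"] n by (intro SUP_upper) (simp add: \<psi>_def)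
  finally show ?thesis unfolding E_def .
qed

text \<open>\<open>|0\<rangle>\<langle>0|\<close> is invariant under both partial transposes, so \<open>T\<^sub>B \<circ> M \<circ> T\<^sub>B\<^sub>'\<close>
  sends \<open>|00\<rangle>\<langle>00|\<close> to \<open>|0\<rangle>\<langle>0| \<otimes> T\<^sub>B(M |0\<rangle>\<langle>0|)\<close>.\<close>

lemma EN_state_nonpos_of_EN_map_nonpos:
  assumes M: "lin_map (dA'*dB') (dA*dB) M" and dB': "0 < dB'" and n: "0 < dA'*dB'"
    and EN: "EN_map dA' dB' dA dB M \<le> 0"
  shows "EN_state dA dB (M (pure_dm (unit_vec (dA'*dB') 0))) \<le> 0"
proof -
  define n m where "n = dA'*dB'" and "m = dA*dB"
  define E where "E = pure_dm (unit_vec n 0 :: complex vec)"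
  define P where "P = ptrans dA dB \<circ> M \<circ> ptrans dA' dB'"
  have P: "lin_map n m P"
    unfolding P_def n_def m_def by (intro lin_map_comp[OF _ lin_map_ptrans] lin_map_comp[OF lin_map_ptrans] M)
  have PE: "P E = ptrans dA dB (M E)"
    unfolding P_def E_def n_def using ptrans_pure_dm_unit_vec_0[OF dB'] by simp
  have n0: "0 < n" using n unfolding n_def .
  have "id_tensor n n m P (pure_dm (unit_vec (n*n) 0)) = kron E (ptrans dA dB (M E))"
    using id_tensor_pure_dm_unit_vec_0[OF P n0] PE unfolding E_def by simp
  moreover have "trace_norm (kron E (ptrans dA dB (M E))) = trace_norm (ptrans dA dB (M E))"
    using trace_norm_kron[OF pure_dm_carrier[of "unit_vec n 0" n] ptrans_carrier, of dA dB "M E"]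
      trace_norm_pure_dm_unit_vec_0[OF n0] unfolding E_def by simp
  ultimately have "trace_norm (ptrans dA dB (M E)) = trace_norm (id_tensor n n m P (pure_dm (unit_vec (n*n) 0)))"
    by simp
  also have "\<dots> \<le> diamond_norm n m P"
    using n0 by (intro trace_norm_le_diamond_norm[OF P] unit_vec_0_in_unit_vecs) simp
  finally have le: "trace_norm (ptrans dA dB (M E)) \<le> diamond_norm n m P" .
  have dle: "log 2 (diamond_norm n m P) \<le> 0" using EN unfolding EN_map_def P_def n_def m_def .
  have "log 2 (trace_norm (ptrans dA dB (M E))) \<le> 0"
  proof (cases "trace_norm (ptrans dA dB (M E)) = 0")
    case True then show ?thesis by (simp add: log_def)
  next
    case False
    then have "trace_norm (ptrans dA dB (M E)) > 0"
      using trace_norm_nonneg[OF ptrans_carrier, of dA dB "M E"] by simp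
    moreover have "diamond_norm n m P \<le> 1" using dle le calculation by simp
    ultimately show ?thesis using le by simp
  qed
  then show ?thesis unfolding EN_state_def E_def n_def .
qed

lemma Rains_map_replacer_le:
  assumes D: "gen_divergence D" and \<omega>: "is_state (dA*dB) \<omega>" and n: "0 < dA'*dB'"
  shows "Rains_map D dA' dB' dA dB (\<lambda>\<rho>. mtrace \<rho> \<cdot>\<^sub>m \<omega>) \<le> Rains_state D dA dB \<omega>"
  unfolding Rains_map_def Rains_state_def
proof (rule INF_mono)
  fix \<sigma> assume "\<sigma> \<in> {\<sigma>. psd (dA*dB) \<sigma> \<and> EN_state dA dB \<sigma> \<le> 0}"
  then have \<sigma>: "psd (dA*dB) \<sigma>" and EN: "EN_state dA dB \<sigma> \<le> 0" by auto
  then have "completely_positive (dA'*dB') (dA*dB) (\<lambda>\<rho>. mtrace \<rho> \<cdot>\<^sub>m \<sigma>)"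
    "EN_map dA' dB' dA dB (\<lambda>\<rho>. mtrace \<rho> \<cdot>\<^sub>m \<sigma>) \<le> 0"
    using completely_positive_replacer[OF \<sigma>] EN_map_replacer[OF _ n, of \<sigma>] by (auto simp: psd_def)
  moreover have "chan_div D (dA'*dB') (dA*dB) (\<lambda>\<rho>. mtrace \<rho> \<cdot>\<^sub>m \<omega>) (\<lambda>\<rho>. mtrace \<rho> \<cdot>\<^sub>m \<sigma>) \<le> D \<omega> \<sigma>"
    by (rule chan_div_replacer_le[OF D \<omega> \<sigma>])
  ultimately show "\<exists>M\<in>{M. completely_positive (dA'*dB') (dA*dB) M \<and> EN_map dA' dB' dA dB M \<le> 0}.
      chan_div D (dA'*dB') (dA*dB) (\<lambda>\<rho>. mtrace \<rho> \<cdot>\<^sub>m \<omega>) M \<le> D \<omega> \<sigma>"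
    by blast
qed

lemma Rains_state_le_Rains_map_replacer:
  assumes D: "gen_divergence D" and \<omega>: "is_state (dA*dB) \<omega>" and dB': "0 < dB'" and n: "0 < dA'*dB'"
  shows "Rains_state D dA dB \<omega> \<le> Rains_map D dA' dB' dA dB (\<lambda>\<rho>. mtrace \<rho> \<cdot>\<^sub>m \<omega>)"
  unfolding Rains_map_def Rains_state_def
proof (rule INF_mono)
  fix M assume "M \<in> {M. completely_positive (dA'*dB') (dA*dB) M \<and> EN_map dA' dB' dA dB M \<le> 0}"
  then have M: "completely_positive (dA'*dB') (dA*dB) M" and EN: "EN_map dA' dB' dA dB M \<le> 0" by auto
  define \<sigma> where "\<sigma> = M (pure_dm (unit_vec (dA'*dB') 0))"
  have "psd (dA*dB) \<sigma>"
    unfolding \<sigma>_def by (rule completely_positive_psd[OF M psd_pure_dm]) simp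
  moreover have "EN_state dA dB \<sigma> \<le> 0"
    unfolding \<sigma>_def using M EN_state_nonpos_of_EN_map_nonpos[OF _ dB' n EN]
    unfolding completely_positive_def by blast
  moreover have "D \<omega> \<sigma> \<le> chan_div D (dA'*dB') (dA*dB) (\<lambda>\<rho>. mtrace \<rho> \<cdot>\<^sub>m \<omega>) M"
    unfolding \<sigma>_def by (rule D_le_chan_div_replacer[OF D \<omega> M n])
  ultimately show "\<exists>\<sigma>\<in>{\<sigma>. psd (dA*dB) \<sigma> \<and> EN_state dA dB \<sigma> \<le> 0}.
      D \<omega> \<sigma> \<le> chan_div D (dA'*dB') (dA*dB) (\<lambda>\<rho>. mtrace \<rho> \<cdot>\<^sub>m \<omega>) M"
    by blast
qed

theorem mainTheorem7:
  fixes dA' dB' dA dB :: nat and \<omega> :: "complex mat"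
    and D :: "complex mat \<Rightarrow> complex mat \<Rightarrow> ereal"
    and N :: "complex mat \<Rightarrow> complex mat"
  assumes "dA' > 0" "dB' > 0" "dA > 0" "dB > 0"
    and "is_state (dA*dB) \<omega>"
    and "gen_divergence D"
    and "N = (\<lambda>\<rho>. mtrace \<rho> \<cdot>\<^sub>m \<omega>)"
  shows "EN_map dA' dB' dA dB N = EN_state dA dB \<omega>
       \<and> Rains_map D dA' dB' dA dB N = Rains_state D dA dB \<omega>"
proof -
  have n: "0 < dA'*dB'" using assms(1,2) by simp
  have "\<omega> \<in> carrier_mat (dA*dB) (dA*dB)" using assms(5) unfolding is_state_def psd_def by auto
  then have "EN_map dA' dB' dA dB N = EN_state dA dB \<omega>"
    unfolding assms(7) by (rule EN_map_replacer[OF _ n])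
  moreover have "Rains_map D dA' dB' dA dB N = Rains_state D dA dB \<omega>"
    unfolding assms(7) using Rains_map_replacer_le[OF assms(6,5) n]
      Rains_state_le_Rains_map_replacer[OF assms(6,5,2) n] by (rule antisym)
  ultimately show ?thesis ..
qed

end
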